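(* Let $N\ge2$, $m\ge3$ be integers and $0<K<N$. Then $\mathrm{PW}_{2K}(\mathcal{B}_N\square\,\mathcal{C}_m)$ is the orthogonal direct sum of the spaces (i) $\mathrm{PW}_{2K-4}(\mathcal{B}_N)\otimes\ell^2(\mathcal{C}_m)$, (ii) $\Lambda_{2K-2}(\mathcal{B}_N)\otimes\mathrm{PW}_2(\mathcal{C}_m)$, and (iii) $\Lambda_{2K}(\mathcal{B}_N)\otimes\Lambda_0(\mathcal{C}_m)$. Moreover: 1. The space (i) has dimension $m\sum_{\kappa=0}^{K-2}\binom{N}{\kappa}$. An orthonormal basis of it consists of the vectors $(u,\ell)\mapsto\delta_0(\ell-j)\psi_{\kappa,\nu}(u)$, $j\in\mathbb{Z}_m$, $0\le\kappa\le K-2$, $1\le\nu\le\binom{N}{\kappa}$. For every $f$ in this space, with $\Psi_{\kappa,\nu}(u,\ell)=\delta_0(\ell)\psi_{\kappa,\nu}(u)$, $\|Qf\|^2=\sum_{\kappa=0}^{K-2}\sum_{\nu=1}^{\binom{N}{\kappa}}|\langle Qf,\Psi_{\kappa,\nu}\rangle|^2.$ 2. Suppose $m=4m'+1$ with $m'$ a positive integer. The space (ii) has dimension $\lfloor(m+1)/2\rfloor\binom{N}{K-1}$, and a basis of it consists of the vectors $(u,\ell)\mapsto\bar{D}_{m'}(\ell-2j)\psi_{K-1,\nu}(u)$, $j=0,\dots,(m-1)/2$, $\nu=1,\dots,\binom{N}{K-1}$. For every $f$ in this space, with $\Psi_{K-1,\nu}(u,\ell)=\bar{D}_{m'}(\ell)\psi_{K-1,\nu}(u)$,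 $\left(\tfrac12+\tfrac{1}{2m}\right)\|Qf\|^2=\sum_{\nu=1}^{\binom{N}{K-1}}|\langle Qf,\Psi_{K-1,\nu}\rangle|^2.$ 3. The space (iii) has dimension $\binom{N}{K}$, and an orthonormal basis of it consists of $\Psi_{K,\nu}(u,\ell)=\frac{1}{\sqrt m}\psi_{K,\nu}(u)$, $\nu=1,\dots,\binom{N}{K}$. For every $f$ in this space, $\tfrac1m\|Qf\|^2=\sum_{\nu=1}^{\binom{N}{K}}|\langle Qf,\Psi_{K,\nu}\rangle|^2.$
   Context: For a finite simple undirected graph $\mathcal{G}$, $L(\mathcal{G})$ is the unnormalized Laplacian $(Lf)(v)=\sum_{w\sim v}[f(v)-f(w)]$, $\Lambda_\lambda(\mathcal{G})$ is the $\lambda$-eigenspace of $L(\mathcal{G})$ (the zero space if $\lambda$ is not an eigenvalue), and $\mathrm{PW}_\lambda(\mathcal{G})$ is the span of the eigenvectors of $L(\mathcal{G})$ with eigenvalue at most $\lambda$ (the zero space if $\lambda<0$). The cycle $\mathcal{C}_m$ has vertex set $\mathbb{Z}_m$ with $\ell\sim\ell\pm1$; its eigenvectors are $\ell\mapsto e^{2\pi ik\ell/m}$ with eigenvalues $4\sin^2(\pi k/m)$. The Boolean cube $\mathcal{B}_N$ has vertex set $\mathbb{Z}_2^N$ with $v\sim w$ iff $v-w=e_i$ for a standard basis vector $e_i$; its eigenvalues are $2\kappa$ with multiplicity $\binom{N}{\kappa}$, $\kappa=0,\dots,N$. For each $\kappa$, $\{\psi_{\kappa,\nu}\}_{\nu=1}^{\binom{N}{\kappa}}$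 is an orthonormal basis of $\Lambda_{2\kappa}(\mathcal{B}_N)$. The Cartesian product $\mathcal{B}_N\square\,\mathcal{C}_m$ has vertex set $\mathbb{Z}_2^N\times\mathbb{Z}_m$ with $(u_1,\ell_1)\sim(u_2,\ell_2)$ iff ($u_1\sim u_2$ and $\ell_1=\ell_2$) or ($u_1=u_2$ and $\ell_1\sim\ell_2$). For $g$ on $\mathcal{B}_N$ and $h$ on $\mathcal{C}_m$, $(g\otimes h)(u,\ell)=g(u)h(\ell)$, and $V\otimes W$ is the span of such products. $Q$ is the operator $(Qf)(u,\ell)=f(u,\ell)$ if $\ell=0$ and $0$ otherwise. $\delta_0(\ell)=1$ if $\ell=0$ and $0$ otherwise. For $n\ge0$, $D_n(\ell)=\sum_{k=-n}^n e^{2\pi ik\ell/m}$ and $\bar{D}_n=D_n/\sqrt{m(2n+1)}$ (unit norm in $\ell^2(\mathcal{C}_m)$). Inner products and norms are the standard ones on $\ell^2$ of the vertex set. *)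

theory Defs
  imports "HOL-Analysis.Analysis" "HOL-Library.Function_Algebras"
begin

definition fscale :: "complex \<Rightarrow> ('v \<Rightarrow> complex) \<Rightarrow> ('v \<Rightarrow> complex)" where
  "fscale c f = (\<lambda>x. c * f x)"

abbreviation cspan :: "('v \<Rightarrow> complex) set \<Rightarrow> ('v \<Rightarrow> complex) set" where
  "cspan S \<equiv> module.span fscale S"

abbreviation cdim :: "('v \<Rightarrow> complex) set \<Rightarrow> nat" where
  "cdim S \<equiv> vector_space.dim fscale S"

definition l2 :: "'v set \<Rightarrow> ('v \<Rightarrow> complex) set" where
  "l2 V = {f. \<forall>x. x \<notin> V \<longrightarrow> f x = 0}"

definition inner_l2 :: "'v set \<Rightarrow> ('v \<Rightarrow> complex) \<Rightarrow> ('v \<Rightarrow> complex) \<Rightarrow> complex" where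
  "inner_l2 V f g = (\<Sum>x\<in>V. f x * cnj (g x))"

definition norm2_l2 :: "'v set \<Rightarrow> ('v \<Rightarrow> complex) \<Rightarrow> real" where
  "norm2_l2 V f = (\<Sum>x\<in>V. (cmod (f x))^2)"

definition is_onb :: "'v set \<Rightarrow> ('v \<Rightarrow> complex) set \<Rightarrow> ('i \<Rightarrow> 'v \<Rightarrow> complex) \<Rightarrow> 'i set \<Rightarrow> bool" where
  "is_onb V S b I \<longleftrightarrow>
     (\<forall>i\<in>I. \<forall>j\<in>I. inner_l2 V (b i) (b j) = (if i = j then 1 else 0)) \<and> cspan (b ` I) = S"

definition is_basis :: "('v \<Rightarrow> complex) set \<Rightarrow> ('i \<Rightarrow> 'v \<Rightarrow> complex) \<Rightarrow> 'i set \<Rightarrow> bool" where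
  "is_basis S b I \<longleftrightarrow>
     (\<forall>c. (\<Sum>i\<in>I. fscale (c i) (b i)) = 0 \<longrightarrow> (\<forall>i\<in>I. c i = 0)) \<and> cspan (b ` I) = S"

definition Lap :: "'v set \<Rightarrow> ('v \<Rightarrow> 'v \<Rightarrow> bool) \<Rightarrow> ('v \<Rightarrow> complex) \<Rightarrow> ('v \<Rightarrow> complex)" where
  "Lap V E f = (\<lambda>v. if v \<in> V then (\<Sum>w\<in>{w\<in>V. E v w}. f v - f w) else 0)"

definition eigsp :: "'v set \<Rightarrow> ('v \<Rightarrow> 'v \<Rightarrow> bool) \<Rightarrow> real \<Rightarrow> ('v \<Rightarrow> complex) set" where
  "eigsp V E lam = {f \<in> l2 V. Lap V E f = fscale (complex_of_real lam) f}"

definition PW :: "'v set \<Rightarrow> ('v \<Rightarrow> 'v \<Rightarrow> bool) \<Rightarrow> real \<Rightarrow> ('v \<Rightarrow> complex) set" where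
  "PW V E lam = cspan {f \<in> l2 V. f \<noteq> 0 \<and> (\<exists>mu::real. mu \<le> lam \<and> Lap V E f = fscale (complex_of_real mu) f)}"

text \<open>Boolean cube B_N: vertices are the elements of Z_2^N, encoded as bool vectors
  v :: nat => bool with v i = False for i >= N; v ~ w iff v - w = e_i, i.e. they differ exactly in one coordinate i < N.\<close>
definition cubeV :: "nat \<Rightarrow> (nat \<Rightarrow> bool) set" where
  "cubeV N = {v. \<forall>i. N \<le> i \<longrightarrow> \<not> v i}"

definition cubeE :: "nat \<Rightarrow> (nat \<Rightarrow> bool) \<Rightarrow> (nat \<Rightarrow> bool) \<Rightarrow> bool" where
  "cubeE N v w \<longleftrightarrow> (\<exists>i<N. \<forall>j. (v j \<noteq> w j) \<longleftrightarrow> j = i)"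

definition cycV :: "nat \<Rightarrow> int set" where
  "cycV m = {0..<int m}"

definition cycE :: "nat \<Rightarrow> int \<Rightarrow> int \<Rightarrow> bool" where
  "cycE m a b \<longleftrightarrow> (a - b) mod int m = 1 \<or> (b - a) mod int m = 1"

definition prodV :: "'a set \<Rightarrow> 'b set \<Rightarrow> ('a \<times> 'b) set" where
  "prodV V1 V2 = V1 \<times> V2"

definition prodE :: "('a \<Rightarrow> 'a \<Rightarrow> bool) \<Rightarrow> ('b \<Rightarrow> 'b \<Rightarrow> bool) \<Rightarrow> ('a \<times> 'b) \<Rightarrow> ('a \<times> 'b) \<Rightarrow> bool" where
  "prodE E1 E2 x y \<longleftrightarrow> (E1 (fst x) (fst y) \<and> snd x = snd y) \<or> (fst x = fst y \<and> E2 (snd x) (snd y))"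

definition tens :: "('a \<Rightarrow> complex) set \<Rightarrow> ('b \<Rightarrow> complex) set \<Rightarrow> ('a \<times> 'b \<Rightarrow> complex) set" where
  "tens A B = cspan {(\<lambda>(u, l). g u * h l) | g h. g \<in> A \<and> h \<in> B}"

definition Qop :: "('a \<times> int \<Rightarrow> complex) \<Rightarrow> ('a \<times> int \<Rightarrow> complex)" where
  "Qop f = (\<lambda>(u, l). if l = 0 then f (u, l) else 0)"

definition delta0 :: "int \<Rightarrow> complex" where
  "delta0 l = (if l = 0 then 1 else 0)"

definition Dir :: "nat \<Rightarrow> nat \<Rightarrow> int \<Rightarrow> complex" where
  "Dir m n l = (\<Sum>k\<in>{-int n..int n}. exp (2 * pi * \<i> * of_int k * of_int l / of_nat m))"

definition Dbar :: "nat \<Rightarrow> nat \<Rightarrow> int \<Rightarrow> complex" where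
  "Dbar m n l = Dir m n l / complex_of_real (sqrt (real m * (2 * real n + 1)))"

end

(*
  The tensor products psi(kappa, nu) (x) e_k of the given eigenbases of B_N with the Fourier
  basis e_k of C_m form an orthonormal eigenbasis of the product Laplacian, with eigenvalues
  2 kappa + lambda_k, where lambda_k = 2 - 2 cos (2 pi k / m) lies in [0, 4] and vanishes only
  for k = 0.  Hence 2 kappa + lambda_k <= 2K exactly when kappa <= K - 2, or kappa = K - 1 and
  lambda_k <= 2, or kappa = K and k = 0; these three disjoint groups of basis vectors span the
  spaces (i)-(iii), which gives the orthogonal decomposition and the dimensions.

  Q only sees the slice l = 0 of f, and for f in any of the three spaces that slice lies in the
  span of orthonormal vectors psi(kappa, nu); Parseval's identity in the slice gives the three
  frame identities, the constant being |Psi(0)|^2 for the cycle factor Psi of the test vectors.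
  For (ii), the Fourier coefficients of the translates D(l - 2j) are powers z_k^j of the points
  z_k = exp (-4 pi i k / m), |k| <= m', which are distinct because m is odd; so a vanishing
  combination of the 2m' + 1 translates is a polynomial of degree 2m' with 2m' + 1 roots.
  Finally |Dbar(0)|^2 = (2m' + 1) / m = 1/2 + 1/(2m).
*)

theory Submission
  imports Defs "HOL-Computational_Algebra.Polynomial"
begin

interpretation cfun: vector_space "fscale :: complex \<Rightarrow> ('v \<Rightarrow> complex) \<Rightarrow> _"
  by unfold_locales (auto simp: fscale_def fun_eq_iff algebra_simps)

section \<open>Linear combinations and orthonormal families\<close>

definition lincomb :: "('i \<Rightarrow> complex) \<Rightarrow> ('i \<Rightarrow> 'v \<Rightarrow> complex) \<Rightarrow> 'i set \<Rightarrow> 'v \<Rightarrow> complex" where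
  "lincomb c b I = (\<lambda>x. \<Sum>i\<in>I. c i * b i x)"

definition family_independent :: "('i \<Rightarrow> 'v \<Rightarrow> complex) \<Rightarrow> 'i set \<Rightarrow> bool" where
  "family_independent b I \<longleftrightarrow> (\<forall>c. lincomb c b I = 0 \<longrightarrow> (\<forall>i\<in>I. c i = 0))"

definition orthonormal_l2 :: "'v set \<Rightarrow> ('i \<Rightarrow> 'v \<Rightarrow> complex) \<Rightarrow> 'i set \<Rightarrow> bool" where
  "orthonormal_l2 V b I \<longleftrightarrow> (\<forall>i\<in>I. \<forall>j\<in>I. inner_l2 V (b i) (b j) = (if i = j then 1 else 0))"

lemma sum_fun_apply: "(\<Sum>i\<in>I. (f i :: 'v \<Rightarrow> 'a :: comm_monoid_add)) x = (\<Sum>i\<in>I. f i x)"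
  by (induction I rule: infinite_finite_induct) auto

lemma sum_fscale_eq_lincomb: "(\<Sum>i\<in>I. fscale (c i) (b i)) = lincomb c b I"
  by (auto simp: fun_eq_iff sum_fun_apply lincomb_def fscale_def)

lemma is_onb_iff: "is_onb V S b I \<longleftrightarrow> orthonormal_l2 V b I \<and> cspan (b ` I) = S"
  by (simp add: is_onb_def orthonormal_l2_def)

lemma is_basis_iff: "is_basis S b I \<longleftrightarrow> family_independent b I \<and> cspan (b ` I) = S"
  by (simp add: is_basis_def family_independent_def sum_fscale_eq_lincomb)

lemma lincomb_in_cspan: "finite I \<Longrightarrow> lincomb c b I \<in> cspan (b ` I)"
  unfolding sum_fscale_eq_lincomb[symmetric]
  by (intro cfun.span_sum cfun.span_scale cfun.span_base) auto

lemma cspan_image_eq_lincombs: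
  assumes fin: "finite I"
  shows "cspan (b ` I) = range (\<lambda>c. lincomb c b I)"
proof
  show "range (\<lambda>c. lincomb c b I) \<subseteq> cspan (b ` I)" using lincomb_in_cspan[OF fin] by auto
  have "cfun.subspace (range (\<lambda>c. lincomb c b I))"
    unfolding cfun.subspace_def
  proof (intro conjI ballI allI)
    show "0 \<in> range (\<lambda>c. lincomb c b I)"
      by (rule range_eqI[of _ _ "\<lambda>_. 0"]) (auto simp: lincomb_def fun_eq_iff)
    fix x y assume "x \<in> range (\<lambda>c. lincomb c b I)" "y \<in> range (\<lambda>c. lincomb c b I)"
    then obtain c d where "x = lincomb c b I" "y = lincomb d b I" by auto
    then show "x + y \<in> range (\<lambda>c. lincomb c b I)"
      by (intro range_eqI[of _ _ "\<lambda>i. c i + d i"])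
        (auto simp: lincomb_def fun_eq_iff sum.distrib algebra_simps)
  next
    fix a x assume "x \<in> range (\<lambda>c. lincomb c b I)"
    then obtain c where "x = lincomb c b I" by auto
    then show "fscale a x \<in> range (\<lambda>c. lincomb c b I)"
      by (intro range_eqI[of _ _ "\<lambda>i. a * c i"])
        (auto simp: lincomb_def fun_eq_iff fscale_def sum_distrib_left algebra_simps)
  qed
  moreover have "b i \<in> range (\<lambda>c. lincomb c b I)" if "i \<in> I" for i
  proof -
    have "(\<Sum>j\<in>I. (if j = i then 1 else 0) * b j x) = (\<Sum>j\<in>I. if j = i then b j x else 0)" for x
      by (rule sum.cong) auto
    then have "lincomb (\<lambda>j. if j = i then 1 else 0) b I = b i"
      using that fin by (simp add: lincomb_def fun_eq_iff)
    then show ?thesis by (metis rangeI)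
  qed
  ultimately show "cspan (b ` I) \<subseteq> range (\<lambda>c. lincomb c b I)"
    using cfun.span_minimal by blast
qed

lemma cspan_imageE:
  assumes "finite I" "f \<in> cspan (b ` I)"
  obtains c where "f = lincomb c b I"
  using assms cspan_image_eq_lincombs[OF assms(1), of b] by auto

lemma family_independent_inj_on:
  assumes fin: "finite I" and indep: "family_independent b I"
  shows "inj_on b I"
proof (rule inj_onI, rule ccontr)
  fix i j assume i: "i \<in> I" and j: "j \<in> I" and eq: "b i = b j" and ne: "i \<noteq> j"
  define c where "c = (\<lambda>k. if k = i then (1::complex) else if k = j then -1 else 0)"
  have "lincomb c b I x = b i x - b j x" for x
  proof -
    have "lincomb c b I x = (\<Sum>k\<in>I. (if k = i then b i x else 0) + (if k = j then - b j x else 0))"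
      unfolding lincomb_def c_def by (intro sum.cong refl) (use ne in auto)
    also have "\<dots> = b i x - b j x" using fin i j by (simp add: sum.distrib)
    finally show ?thesis .
  qed
  then have "lincomb c b I = 0" using eq by (simp add: fun_eq_iff)
  then have "c i = 0" using indep i unfolding family_independent_def by blast
  then show False by (simp add: c_def)
qed

lemma family_independent_independent:
  assumes fin: "finite I" and indep: "family_independent b I"
  shows "cfun.independent (b ` I)"
proof (rule cfun.independent_if_scalars_zero)
  show "finite (b ` I)" using fin by simp
  fix f x assume s: "(\<Sum>x\<in>b ` I. fscale (f x) x) = 0" and x: "x \<in> b ` I"
  have "(\<Sum>x\<in>b ` I. fscale (f x) x) = (\<Sum>i\<in>I. fscale (f (b i)) (b i))"
    using family_independent_inj_on[OF assms] by (simp add: sum.reindex)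
  also have "\<dots> = lincomb (\<lambda>i. f (b i)) b I" by (rule sum_fscale_eq_lincomb)
  finally have "(\<Sum>x\<in>b ` I. fscale (f x) x) = lincomb (\<lambda>i. f (b i)) b I" .
  then show "f x = 0" using s x indep by (auto simp: family_independent_def)
qed

lemma cdim_cspan_family_independent:
  assumes "finite I" "family_independent b I"
  shows "cdim (cspan (b ` I)) = card I"
  using cfun.dim_span_eq_card_independent[OF family_independent_independent[OF assms]]
    family_independent_inj_on[OF assms] by (simp add: card_image)

lemma (in vector_space) independent_spans_if_card_ge:
  assumes "finite W" "V \<subseteq> span W" "B \<subseteq> V" "independent B" "finite B" "card W \<le> card B"
  shows "V \<subseteq> span B"
proof
  fix a assume aV: "a \<in> V"
  show "a \<in> span B"
  proof (rule ccontr)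
    assume aB: "a \<notin> span B"
    then have "independent (insert a B)" using assms(4) by (simp add: independent_insert)
    moreover have "insert a B \<subseteq> span W" using assms aV by auto
    ultimately have "card (insert a B) \<le> card W" using independent_span_bound[OF assms(1)] by blast
    moreover have "a \<notin> B" using aB span_base by blast
    ultimately show False using assms(5,6) by simp
  qed
qed

lemma inner_l2_lincomb_left:
  "finite I \<Longrightarrow> inner_l2 V (lincomb c b I) g = (\<Sum>i\<in>I. c i * inner_l2 V (b i) g)"
  by (auto simp: inner_l2_def lincomb_def sum_distrib_left sum_distrib_right mult.assoc intro: sum.swap)

lemma inner_l2_lincomb_right:
  "finite I \<Longrightarrow> inner_l2 V g (lincomb c b I) = (\<Sum>i\<in>I. cnj (c i) * inner_l2 V g (b i))"
  by (auto simp: inner_l2_def lincomb_def sum_distrib_left sum_distrib_right algebra_simps intro: sum.swap)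

lemma inner_l2_fscale_left: "inner_l2 V (fscale a f) g = a * inner_l2 V f g"
  by (simp add: inner_l2_def fscale_def sum_distrib_left mult.assoc)

lemma inner_l2_fscale_right: "inner_l2 V f (fscale a g) = cnj a * inner_l2 V f g"
  by (simp add: inner_l2_def fscale_def sum_distrib_left algebra_simps)

lemma inner_l2_self: "inner_l2 V f f = complex_of_real (norm2_l2 V f)"
  by (simp add: inner_l2_def norm2_l2_def complex_norm_square[symmetric])

lemma orthonormal_l2_subset: "orthonormal_l2 V b I \<Longrightarrow> J \<subseteq> I \<Longrightarrow> orthonormal_l2 V b J"
  unfolding orthonormal_l2_def by blast

lemma orthonormal_l2_coeff:
  assumes "finite I" "orthonormal_l2 V b I" "j \<in> I"
  shows "inner_l2 V (lincomb c b I) (b j) = c j"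
proof -
  have "inner_l2 V (lincomb c b I) (b j) = (\<Sum>i\<in>I. c i * (if i = j then 1 else 0))"
    using assms by (auto simp: inner_l2_lincomb_left orthonormal_l2_def intro!: sum.cong)
  also have "\<dots> = c j" using assms by (simp add: if_distrib cong: if_cong)
  finally show ?thesis .
qed

lemma norm2_l2_lincomb_orthonormal:
  assumes "finite I" "orthonormal_l2 V b I"
  shows "norm2_l2 V (lincomb c b I) = (\<Sum>i\<in>I. (cmod (c i))^2)"
proof -
  have "complex_of_real (norm2_l2 V (lincomb c b I)) = inner_l2 V (lincomb c b I) (lincomb c b I)"
    by (simp add: inner_l2_self)
  also have "\<dots> = (\<Sum>i\<in>I. c i * cnj (c i))"
    using assms by (simp add: inner_l2_lincomb_right orthonormal_l2_coeff mult.commute)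
  also have "\<dots> = complex_of_real (\<Sum>i\<in>I. (cmod (c i))^2)"
    by (simp only: complex_norm_square of_real_sum)
  finally show ?thesis by (simp only: of_real_eq_iff)
qed

lemma orthonormal_l2_family_independent:
  assumes "finite I" "orthonormal_l2 V b I"
  shows "family_independent b I"
  unfolding family_independent_def
proof (intro allI impI ballI)
  fix c i assume "lincomb c b I = 0" "i \<in> I"
  then have "inner_l2 V (lincomb c b I) (b i) = 0" by (simp add: inner_l2_def)
  then show "c i = 0" using orthonormal_l2_coeff[OF assms \<open>i \<in> I\<close>] by simp
qed

lemma orthonormal_l2_nonzero:
  assumes "orthonormal_l2 V b I" "i \<in> I"
  shows "b i \<noteq> 0"
proof
  assume "b i = 0"
  then have "inner_l2 V (b i) (b i) = 0" by (simp add: inner_l2_def)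
  then show False using assms unfolding orthonormal_l2_def by auto
qed

lemma orthonormal_l2_expansion:
  assumes "finite I" "orthonormal_l2 V b I" "f \<in> cspan (b ` I)"
  shows "f = lincomb (\<lambda>i. inner_l2 V f (b i)) b I"
proof -
  obtain c where c: "f = lincomb c b I" using cspan_imageE assms by blast
  then show ?thesis using orthonormal_l2_coeff[OF assms(1,2)] by (simp add: lincomb_def)
qed

lemma orthonormal_l2_cspan_orthogonal:
  assumes "orthonormal_l2 V b I" "finite I1" "finite I2" "I1 \<subseteq> I" "I2 \<subseteq> I" "I1 \<inter> I2 = {}"
    and "f \<in> cspan (b ` I1)" "g \<in> cspan (b ` I2)"
  shows "inner_l2 V f g = 0"
proof -
  obtain c d where f: "f = lincomb c b I1" and g: "g = lincomb d b I2"
    using cspan_imageE assms(2,3,7,8) by metis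
  have "inner_l2 V (b i) (b j) = 0" if "i \<in> I1" "j \<in> I2" for i j
  proof -
    have "i \<noteq> j" "i \<in> I" "j \<in> I" using that assms(4-6) by auto
    then show ?thesis using assms(1) unfolding orthonormal_l2_def by auto
  qed
  then show ?thesis
    using assms(2,3) by (simp add: f g inner_l2_lincomb_left inner_l2_lincomb_right)
qed

lemma l2_subspace: "cfun.subspace (l2 V)"
  by (auto simp: cfun.subspace_def l2_def fscale_def)

lemma l2_subset_cspan_indicators:
  assumes "finite V"
  shows "l2 V \<subseteq> cspan ((\<lambda>v x. if x = v then 1 else 0) ` V)"
proof
  fix f assume "f \<in> l2 V"
  then have "f = lincomb f (\<lambda>v x. if x = v then 1 else 0) V"
    using assms by (auto simp: lincomb_def fun_eq_iff l2_def if_distrib cong: if_cong)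
  then show "f \<in> cspan ((\<lambda>v x. if x = v then 1 else 0) ` V)"
    using lincomb_in_cspan[OF assms] by metis
qed

lemma orthonormal_l2_cspan_eq_l2:
  assumes "finite V" "finite I" "orthonormal_l2 V b I" "\<And>i. i \<in> I \<Longrightarrow> b i \<in> l2 V"
    and "card V \<le> card I"
  shows "cspan (b ` I) = l2 V"
proof
  show "cspan (b ` I) \<subseteq> l2 V"
    by (rule cfun.span_minimal[OF _ l2_subspace]) (use assms(4) in auto)
  have indep: "family_independent b I" by (rule orthonormal_l2_family_independent[OF assms(2,3)])
  show "l2 V \<subseteq> cspan (b ` I)"
  proof (rule cfun.independent_spans_if_card_ge[OF _ l2_subset_cspan_indicators[OF assms(1)]])
    have "card ((\<lambda>v x. if x = v then 1 else (0::complex)) ` V) \<le> card I"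
      using card_image_le[OF assms(1)] assms(5) by (rule le_trans)
    then show "card ((\<lambda>v x. if x = v then 1 else (0::complex)) ` V) \<le> card (b ` I)"
      using family_independent_inj_on[OF assms(2) indep] by (simp add: card_image)
  qed (use assms family_independent_independent[OF assms(2) indep] in auto)
qed

lemma is_onb_reindex:
  assumes "is_onb V S b I" "bij_betw h J I" "\<And>j. j \<in> J \<Longrightarrow> b' j = b (h j)"
  shows "is_onb V S b' J"
proof -
  have "b' ` J = b ` I"
    using assms(2,3) by (auto simp: bij_betw_def image_comp[symmetric] cong: image_cong)
  moreover have "orthonormal_l2 V b' J"
    using assms unfolding is_onb_iff orthonormal_l2_def bij_betw_def inj_on_def
    by (auto simp: bij_betw_apply)
  ultimately show ?thesis using assms(1) by (simp add: is_onb_iff)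
qed

lemma orthonormal_l2_indicators:
  assumes "finite C"
  shows "orthonormal_l2 C (\<lambda>j l. if l = j then 1 else 0) C"
  unfolding orthonormal_l2_def inner_l2_def
proof (intro ballI)
  fix i j assume "i \<in> C" "j \<in> C"
  have "(\<Sum>x\<in>C. (if x = i then 1 else 0) * cnj (if x = j then 1 else 0))
      = (\<Sum>x\<in>C. if x = i then (if i = j then 1 else 0) else (0::complex))"
    by (rule sum.cong) auto
  then show "(\<Sum>x\<in>C. (if x = i then 1 else 0) * cnj (if x = j then 1 else 0)) = (if i = j then 1 else 0)"
    using assms \<open>i \<in> C\<close> by simp
qed

lemma cspan_indicators_eq_l2: "finite C \<Longrightarrow> cspan ((\<lambda>j l. if l = j then 1 else 0) ` C) = l2 C"
  by (rule orthonormal_l2_cspan_eq_l2[OF _ _ orthonormal_l2_indicators]) (auto simp: l2_def)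

section \<open>Laplacians and Paley--Wiener spaces\<close>

lemma Lap_eq_sum:
  "finite V \<Longrightarrow> v \<in> V \<Longrightarrow> Lap V E f v = (\<Sum>w\<in>V. if E v w then f v - f w else 0)"
  by (simp add: Lap_def sum.inter_filter)

lemma Lap_self_adjoint:
  assumes fin: "finite V" and sym: "\<And>x y. E x y = E y x"
  shows "inner_l2 V (Lap V E f) g = inner_l2 V f (Lap V E g)"
proof -
  define T where "T = (\<Sum>v\<in>V. \<Sum>w\<in>V. if E v w then f v * cnj (g v) else 0)"
  define T' where "T' = (\<Sum>v\<in>V. \<Sum>w\<in>V. if E v w then f w * cnj (g v) else 0)"
  define T'' where "T'' = (\<Sum>v\<in>V. \<Sum>w\<in>V. if E v w then f v * cnj (g w) else 0)"
  have "inner_l2 V (Lap V E f) g = (\<Sum>v\<in>V. \<Sum>w\<in>V.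
      (if E v w then f v * cnj (g v) else 0) - (if E v w then f w * cnj (g v) else 0))"
    unfolding inner_l2_def using fin
    by (intro sum.cong refl) (auto simp: Lap_eq_sum sum_distrib_right left_diff_distrib intro!: sum.cong)
  then have left: "inner_l2 V (Lap V E f) g = T - T'" by (simp add: T_def T'_def sum_subtractf)
  have "inner_l2 V f (Lap V E g) = (\<Sum>v\<in>V. \<Sum>w\<in>V.
      (if E v w then f v * cnj (g v) else 0) - (if E v w then f v * cnj (g w) else 0))"
    unfolding inner_l2_def using fin
    by (intro sum.cong refl) (auto simp: Lap_eq_sum sum_distrib_left right_diff_distrib intro!: sum.cong)
  then have right: "inner_l2 V f (Lap V E g) = T - T''" by (simp add: T_def T''_def sum_subtractf)
  have "T' = T''" unfolding T'_def T''_def by (subst sum.swap) (simp add: sym)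
  then show ?thesis using left right by simp
qed

lemma Lap_lincomb:
  assumes "finite I"
  shows "Lap V E (lincomb c b I) = lincomb c (\<lambda>i. Lap V E (b i)) I"
proof
  fix v
  show "Lap V E (lincomb c b I) v = lincomb c (\<lambda>i. Lap V E (b i)) I v"
  proof (cases "v \<in> V")
    case True
    have "Lap V E (lincomb c b I) v = (\<Sum>w\<in>{w \<in> V. E v w}. \<Sum>i\<in>I. c i * (b i v - b i w))"
      using True by (simp add: Lap_def lincomb_def sum_subtractf[symmetric] right_diff_distrib)
    also have "\<dots> = (\<Sum>i\<in>I. c i * (\<Sum>w\<in>{w \<in> V. E v w}. b i v - b i w))"
      by (subst sum.swap) (simp add: sum_distrib_left)
    also have "\<dots> = lincomb c (\<lambda>i. Lap V E (b i)) I v"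
      using True by (simp add: Lap_def lincomb_def)
    finally show ?thesis .
  qed (simp add: Lap_def lincomb_def)
qed

lemma eigenvectors_orthogonal:
  assumes "finite V" "\<And>x y. E x y = E y x"
    and f: "Lap V E f = fscale (complex_of_real \<mu>) f"
    and g: "Lap V E g = fscale (complex_of_real \<mu>') g" and "\<mu>' \<noteq> \<mu>"
  shows "inner_l2 V f g = 0"
proof -
  have "complex_of_real \<mu> * inner_l2 V f g = inner_l2 V (Lap V E f) g"
    by (simp add: f inner_l2_fscale_left)
  also have "\<dots> = inner_l2 V f (Lap V E g)" by (rule Lap_self_adjoint[OF assms(1,2)])
  also have "\<dots> = complex_of_real \<mu>' * inner_l2 V f g"
    by (simp add: g inner_l2_fscale_right)
  finally have "(complex_of_real \<mu> - complex_of_real \<mu>') * inner_l2 V f g = 0"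
    by (simp add: algebra_simps)
  then show ?thesis using \<open>\<mu>' \<noteq> \<mu>\<close> by simp
qed

locale orthonormal_eigenbasis =
  fixes V :: "'v set" and E :: "'v \<Rightarrow> 'v \<Rightarrow> bool"
    and b :: "'i \<Rightarrow> 'v \<Rightarrow> complex" and I :: "'i set" and eigval :: "'i \<Rightarrow> real"
  assumes finite_V: "finite V" and sym: "\<And>x y. E x y = E y x" and finite_I: "finite I"
    and orthonormal: "orthonormal_l2 V b I" and cspan_eq: "cspan (b ` I) = l2 V"
    and eigen: "\<And>i. i \<in> I \<Longrightarrow> Lap V E (b i) = fscale (complex_of_real (eigval i)) (b i)"
begin

lemma basis_in_l2: "i \<in> I \<Longrightarrow> b i \<in> l2 V"
  using cspan_eq cfun.span_base[of "b i" "b ` I"] by auto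

lemma eigenvector_expansion:
  assumes "f \<in> l2 V" "Lap V E f = fscale (complex_of_real \<mu>) f"
  shows "f = lincomb (\<lambda>i. inner_l2 V f (b i)) b {i\<in>I. eigval i = \<mu>}"
proof -
  have "f = lincomb (\<lambda>i. inner_l2 V f (b i)) b I"
    using orthonormal_l2_expansion[OF finite_I orthonormal] assms(1) cspan_eq by blast
  also have "\<dots> = lincomb (\<lambda>i. inner_l2 V f (b i)) b {i\<in>I. eigval i = \<mu>}"
  proof -
    have "inner_l2 V f (b i) = 0" if "i \<in> I" "eigval i \<noteq> \<mu>" for i
      using eigenvectors_orthogonal[OF finite_V sym assms(2) eigen] that by auto
    then show ?thesis unfolding lincomb_def
      by (intro ext sum.mono_neutral_right) (use finite_I in auto)
  qed
  finally show ?thesis .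
qed

lemma eigenvector_in_cspan:
  assumes "f \<in> l2 V" "Lap V E f = fscale (complex_of_real \<mu>) f"
  shows "f \<in> cspan (b ` {i\<in>I. eigval i = \<mu>})"
proof -
  have "finite {i\<in>I. eigval i = \<mu>}" using finite_I by simp
  then show ?thesis by (subst eigenvector_expansion[OF assms]) (rule lincomb_in_cspan)
qed

lemma PW_eq_cspan: "PW V E t = cspan (b ` {i\<in>I. eigval i \<le> t})"
proof
  show "PW V E t \<subseteq> cspan (b ` {i\<in>I. eigval i \<le> t})"
    unfolding PW_def
  proof (rule cfun.span_minimal[OF _ cfun.subspace_span], rule subsetI)
    fix f assume "f \<in> {f \<in> l2 V. f \<noteq> 0 \<and> (\<exists>\<mu>. \<mu> \<le> t \<and> Lap V E f = fscale (complex_of_real \<mu>) f)}"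
    then obtain \<mu> where f: "f \<in> l2 V" "\<mu> \<le> t" "Lap V E f = fscale (complex_of_real \<mu>) f"
      by auto
    have "f \<in> cspan (b ` {i\<in>I. eigval i = \<mu>})" by (rule eigenvector_in_cspan[OF f(1,3)])
    also have "\<dots> \<subseteq> cspan (b ` {i\<in>I. eigval i \<le> t})" by (rule cfun.span_mono) (use f(2) in auto)
    finally show "f \<in> cspan (b ` {i\<in>I. eigval i \<le> t})" .
  qed
  show "cspan (b ` {i\<in>I. eigval i \<le> t}) \<subseteq> PW V E t"
    unfolding PW_def
    by (rule cfun.span_mono) (auto intro!: basis_in_l2 eigen orthonormal_l2_nonzero[OF orthonormal])
qed

lemma eigsp_eq_cspan: "eigsp V E \<mu> = cspan (b ` {i\<in>I. eigval i = \<mu>})"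
proof
  show "eigsp V E \<mu> \<subseteq> cspan (b ` {i\<in>I. eigval i = \<mu>})"
    using eigenvector_in_cspan by (auto simp: eigsp_def)
  show "cspan (b ` {i\<in>I. eigval i = \<mu>}) \<subseteq> eigsp V E \<mu>"
  proof
    fix f assume f: "f \<in> cspan (b ` {i\<in>I. eigval i = \<mu>})"
    have fin: "finite {i\<in>I. eigval i = \<mu>}" using finite_I by auto
    obtain c where c: "f = lincomb c b {i\<in>I. eigval i = \<mu>}" using cspan_imageE[OF fin f] by blast
    have "Lap V E f = lincomb c (\<lambda>i. Lap V E (b i)) {i\<in>I. eigval i = \<mu>}"
      unfolding c by (rule Lap_lincomb[OF fin])
    also have "\<dots> = lincomb c (\<lambda>i. fscale (complex_of_real \<mu>) (b i)) {i\<in>I. eigval i = \<mu>}"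
      unfolding lincomb_def using eigen by (auto intro!: ext sum.cong)
    also have "\<dots> = fscale (complex_of_real \<mu>) f"
      by (simp add: c lincomb_def fscale_def fun_eq_iff sum_distrib_left algebra_simps)
    finally have "Lap V E f = fscale (complex_of_real \<mu>) f" .
    moreover have "f \<in> l2 V"
      using f cspan_eq cfun.span_mono[of "b ` {i\<in>I. eigval i = \<mu>}" "b ` I"] by auto
    ultimately show "f \<in> eigsp V E \<mu>" by (simp add: eigsp_def)
  qed
qed

end

section \<open>Tensor products\<close>

definition tensor :: "('a \<Rightarrow> complex) \<Rightarrow> ('b \<Rightarrow> complex) \<Rightarrow> ('a \<times> 'b \<Rightarrow> complex)" where
  "tensor g h = (\<lambda>(u, l). g u * h l)"

lemma tensor_lincomb:
  assumes "finite I" "finite J"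
  shows "tensor (lincomb c g I) (lincomb d h J)
    = lincomb (\<lambda>(i, j). c i * d j) (\<lambda>(i, j). tensor (g i) (h j)) (I \<times> J)"
proof -
  have "(\<Sum>i\<in>I. c i * g i u) * (\<Sum>j\<in>J. d j * h j l)
      = (\<Sum>(i, j)\<in>I \<times> J. (c i * d j) * (g i u * h j l))" for u l
    by (simp add: sum_product sum.cartesian_product[symmetric] algebra_simps)
  then show ?thesis by (auto simp: tensor_def lincomb_def fun_eq_iff case_prod_beta)
qed

lemma tens_cspan:
  assumes "finite I" "finite J"
  shows "tens (cspan (g ` I)) (cspan (h ` J)) = cspan ((\<lambda>(i, j). tensor (g i) (h j)) ` (I \<times> J))"
proof
  show "tens (cspan (g ` I)) (cspan (h ` J)) \<subseteq> cspan ((\<lambda>(i, j). tensor (g i) (h j)) ` (I \<times> J))"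
    unfolding tens_def
  proof (rule cfun.span_minimal[OF _ cfun.subspace_span], rule subsetI)
    fix x assume "x \<in> {\<lambda>(u, l). g' u * h' l |g' h'. g' \<in> cspan (g ` I) \<and> h' \<in> cspan (h ` J)}"
    then obtain g' h' where x: "x = tensor g' h'" and "g' \<in> cspan (g ` I)" "h' \<in> cspan (h ` J)"
      by (auto simp: tensor_def)
    then obtain c d where "g' = lincomb c g I" "h' = lincomb d h J"
      using cspan_imageE assms by metis
    then have "x = lincomb (\<lambda>(i, j). c i * d j) (\<lambda>(i, j). tensor (g i) (h j)) (I \<times> J)"
      using x tensor_lincomb[OF assms] by simp
    then show "x \<in> cspan ((\<lambda>(i, j). tensor (g i) (h j)) ` (I \<times> J))"
      using lincomb_in_cspan[of "I \<times> J"] assms by simp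
  qed
  show "cspan ((\<lambda>(i, j). tensor (g i) (h j)) ` (I \<times> J)) \<subseteq> tens (cspan (g ` I)) (cspan (h ` J))"
    unfolding tens_def tensor_def
    by (rule cfun.span_mono) (auto intro: cfun.span_base)
qed

lemma tens_slice_in:
  assumes X: "cfun.subspace X" and f: "f \<in> tens X Y"
  shows "(\<lambda>u. f (u, l0)) \<in> X"
proof -
  have sub: "cfun.subspace {f. (\<lambda>u. f (u, l0)) \<in> X}"
    unfolding cfun.subspace_def
  proof (intro conjI allI ballI)
    show "0 \<in> {f. (\<lambda>u. f (u, l0)) \<in> X}" using cfun.subspace_0[OF X] by (simp add: zero_fun_def)
    fix x y assume "x \<in> {f. (\<lambda>u. f (u, l0)) \<in> X}" "y \<in> {f. (\<lambda>u. f (u, l0)) \<in> X}"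
    then have "(\<lambda>u. x (u, l0)) + (\<lambda>u. y (u, l0)) \<in> X" using cfun.subspace_add[OF X] by simp
    then show "x + y \<in> {f. (\<lambda>u. f (u, l0)) \<in> X}" by (simp add: plus_fun_def)
  next
    fix c x assume "x \<in> {f. (\<lambda>u. f (u, l0)) \<in> X}"
    then have "fscale c (\<lambda>u. x (u, l0)) \<in> X" using cfun.subspace_scale[OF X] by simp
    then show "fscale c x \<in> {f. (\<lambda>u. f (u, l0)) \<in> X}" by (simp add: fscale_def)
  qed
  have gen: "{(\<lambda>(u, l). g u * h l) | g h. g \<in> X \<and> h \<in> Y} \<subseteq> {f. (\<lambda>u. f (u, l0)) \<in> X}"
  proof
    fix x assume "x \<in> {(\<lambda>(u, l). g u * h l) | g h. g \<in> X \<and> h \<in> Y}"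
    then obtain g h where x: "x = (\<lambda>(u, l). g u * h l)" and g: "g \<in> X" by auto
    have "fscale (h l0) g \<in> X" using cfun.subspace_scale[OF X g] .
    then show "x \<in> {f. (\<lambda>u. f (u, l0)) \<in> X}" by (simp add: x fscale_def mult.commute)
  qed
  show ?thesis using cfun.span_minimal[OF gen sub] f by (auto simp: tens_def)
qed

lemma inner_l2_tensor:
  assumes "finite A" "finite C"
  shows "inner_l2 (A \<times> C) (tensor g h) (tensor g' h') = inner_l2 A g g' * inner_l2 C h h'"
  unfolding inner_l2_def tensor_def
  by (simp add: sum.cartesian_product' sum_product algebra_simps)

lemma orthonormal_l2_tensor:
  assumes "finite A" "finite C" "orthonormal_l2 A g I" "orthonormal_l2 C h J"
  shows "orthonormal_l2 (A \<times> C) (\<lambda>(i, j). tensor (g i) (h j)) (I \<times> J)"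
  using assms unfolding orthonormal_l2_def by (auto simp: inner_l2_tensor)

lemma tensor_in_l2: "g \<in> l2 A \<Longrightarrow> h \<in> l2 C \<Longrightarrow> tensor g h \<in> l2 (A \<times> C)"
  by (auto simp: l2_def tensor_def)

lemma Lap_tensor:
  assumes "finite A" "finite C" and irrefl: "\<And>u. \<not> Ea u u" and g: "g \<in> l2 A" and h: "h \<in> l2 C"
  shows "Lap (A \<times> C) (prodE Ea Eb) (tensor g h) = tensor (Lap A Ea g) h + tensor g (Lap C Eb h)"
proof
  fix x :: "'a \<times> 'b"
  obtain u l where x: "x = (u, l)" by force
  show "Lap (A \<times> C) (prodE Ea Eb) (tensor g h) x = (tensor (Lap A Ea g) h + tensor g (Lap C Eb h)) x"
  proof (cases "u \<in> A \<and> l \<in> C")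
    case False
    then show ?thesis using g h by (auto simp: x Lap_def tensor_def l2_def)
  next
    case True
    let ?H = "(\<lambda>u'. (u', l)) ` {u' \<in> A. Ea u u'}" and ?W = "(\<lambda>l'. (u, l')) ` {l' \<in> C. Eb l l'}"
    have nbrs: "{w \<in> A \<times> C. prodE Ea Eb (u, l) w} = ?H \<union> ?W"
      using True by (auto simp: prodE_def)
    have "?H \<inter> ?W = {}" using irrefl by auto
    then have "Lap (A \<times> C) (prodE Ea Eb) (tensor g h) x
        = (\<Sum>w\<in>?H. tensor g h (u, l) - tensor g h w) + (\<Sum>w\<in>?W. tensor g h (u, l) - tensor g h w)"
      using True assms(1,2) by (simp add: x Lap_def nbrs sum.union_disjoint)
    also have "\<dots> = (\<Sum>u'\<in>{u' \<in> A. Ea u u'}. (g u - g u') * h l)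
        + (\<Sum>l'\<in>{l' \<in> C. Eb l l'}. g u * (h l - h l'))"
      by (simp add: sum.reindex inj_on_def tensor_def algebra_simps)
    also have "\<dots> = (tensor (Lap A Ea g) h + tensor g (Lap C Eb h)) x"
      using True by (simp add: x tensor_def Lap_def sum_distrib_left sum_distrib_right)
    finally show ?thesis .
  qed
qed

lemma Lap_tensor_eigen:
  assumes "finite A" "finite C" "\<And>u. \<not> Ea u u" "g \<in> l2 A" "h \<in> l2 C"
    and "Lap A Ea g = fscale (complex_of_real a) g" and "Lap C Eb h = fscale (complex_of_real b) h"
  shows "Lap (A \<times> C) (prodE Ea Eb) (tensor g h) = fscale (complex_of_real (a + b)) (tensor g h)"
  using Lap_tensor[where Ea=Ea and Eb=Eb, OF assms(1-5)] assms(6,7)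
  by (auto simp: fun_eq_iff tensor_def fscale_def algebra_simps)

lemma orthonormal_eigenbasis_tensor:
  assumes "orthonormal_eigenbasis A Ea g I \<alpha>" "orthonormal_eigenbasis C Eb h J \<beta>"
    and "\<And>u. \<not> Ea u u" "card (A \<times> C) \<le> card (I \<times> J)"
  shows "orthonormal_eigenbasis (A \<times> C) (prodE Ea Eb)
    (\<lambda>(i, j). tensor (g i) (h j)) (I \<times> J) (\<lambda>(i, j). \<alpha> i + \<beta> j)"
proof -
  interpret A: orthonormal_eigenbasis A Ea g I \<alpha> by fact
  interpret C: orthonormal_eigenbasis C Eb h J \<beta> by fact
  have orth: "orthonormal_l2 (A \<times> C) (\<lambda>(i, j). tensor (g i) (h j)) (I \<times> J)"
    by (rule orthonormal_l2_tensor[OF A.finite_V C.finite_V A.orthonormal C.orthonormal])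
  show ?thesis
  proof
    show "cspan ((\<lambda>(i, j). tensor (g i) (h j)) ` (I \<times> J)) = l2 (A \<times> C)"
      by (rule orthonormal_l2_cspan_eq_l2[OF _ _ orth])
        (use assms(4) A.finite_V C.finite_V A.finite_I C.finite_I in
          \<open>auto intro: tensor_in_l2 A.basis_in_l2 C.basis_in_l2\<close>)
    show "\<And>p. p \<in> I \<times> J \<Longrightarrow> Lap (A \<times> C) (prodE Ea Eb) ((\<lambda>(i, j). tensor (g i) (h j)) p)
        = fscale (complex_of_real ((\<lambda>(i, j). \<alpha> i + \<beta> j) p)) ((\<lambda>(i, j). tensor (g i) (h j)) p)"
      using assms(3) by (auto intro!: Lap_tensor_eigen A.finite_V C.finite_V A.basis_in_l2 C.basis_in_l2
          A.eigen C.eigen)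
    show "prodE Ea Eb x y = prodE Ea Eb y x" for x y
      using A.sym C.sym unfolding prodE_def by metis
  qed (use A.finite_V C.finite_V A.finite_I C.finite_I orth in auto)
qed

section \<open>The cycle\<close>

definition cyc_char :: "nat \<Rightarrow> int \<Rightarrow> int \<Rightarrow> complex" where
  "cyc_char m k l = exp (2 * pi * \<i> * of_int k * of_int l / of_nat m)"

lemma cyc_char_cis: "cyc_char m k l = cis (2 * pi * of_int k * of_int l / of_nat m)"
  by (simp add: cyc_char_def cis_conv_exp algebra_simps)

lemma cyc_char_add: "cyc_char m k (a + b) = cyc_char m k a * cyc_char m k b"
  by (simp add: cyc_char_cis cis_mult add_divide_distrib algebra_simps)

lemma cyc_char_multiple:
  assumes "m > 0" "int m dvd k * l"
  shows "cyc_char m k l = 1"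
proof -
  obtain q where "k * l = int m * q" using assms(2) by (auto simp: dvd_def)
  then have "of_int k * of_int l = (of_nat m * of_int q :: real)"
    by (metis of_int_mult of_int_of_nat_eq)
  then have "2 * pi * of_int k * of_int l / of_nat m = 2 * pi * of_int q"
    using assms(1) by (simp add: field_simps)
  then show ?thesis by (simp add: cyc_char_cis)
qed

lemma cyc_char_mod:
  assumes "m > 0"
  shows "cyc_char m k (l mod int m) = cyc_char m k l"
proof -
  have "cyc_char m k (int m * (l div int m)) = 1"
    by (rule cyc_char_multiple[OF assms]) simp
  then show ?thesis
    using cyc_char_add[of m k "l mod int m" "int m * (l div int m)"] by simp
qed

lemma cyc_char_diff: "cyc_char m k (a - b) = cyc_char m k a * cyc_char m k (- b)"
  by (metis diff_conv_add_uminus cyc_char_add)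

lemma cyc_char_mult_cnj: "cyc_char m k l * cnj (cyc_char m k' l) = cyc_char m (k - k') l"
  by (simp add: cyc_char_cis cis_cnj cis_mult diff_divide_distrib algebra_simps)

lemma cyc_char_zero [simp]: "cyc_char m 0 l = 1" "cyc_char m k 0 = 1"
  by (simp_all add: cyc_char_def)

lemma cyc_char_power: "cyc_char m k (a * int n) = cyc_char m k a ^ n"
  by (induction n) (simp_all add: algebra_simps cyc_char_add)

lemma cyc_char_eq_1_iff:
  assumes "m > 0"
  shows "cyc_char m k l = 1 \<longleftrightarrow> int m dvd k * l"
proof
  assume "cyc_char m k l = 1"
  then have "cos (2 * pi * of_int (k * l) / of_nat m) = 1"
    by (simp add: cyc_char_cis complex_eq_iff mult.assoc)
  then obtain n :: int where "2 * pi * of_int (k * l) / of_nat m = of_int n * 2 * pi"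
    by (auto simp: cos_one_2pi_int)
  then have "(of_int (k * l) :: real) = of_int (n * int m)" using assms by (simp add: field_simps)
  then have "k * l = n * int m" by (simp only: of_int_eq_iff)
  then show "int m dvd k * l" by simp
qed (use cyc_char_multiple[OF assms] in auto)

lemma norm_cyc_char [simp]: "cmod (cyc_char m k l) = 1"
  by (simp add: cyc_char_cis)

lemma sum_cyc_char:
  assumes "m > 0"
  shows "(\<Sum>l\<in>{0..<int m}. cyc_char m d l) = (if int m dvd d then of_nat m else 0)"
proof (cases "int m dvd d")
  case True
  then show ?thesis using cyc_char_multiple[OF assms, of d] by simp
next
  case False
  let ?z = "cyc_char m d 1"
  have "?z \<noteq> 1" using cyc_char_eq_1_iff[OF assms, of d 1] False by simp
  moreover have "?z ^ m = 1"
    using cyc_char_power[of m d 1 m] cyc_char_multiple[OF assms, of d "int m"] by simp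
  moreover have "{0..<int m} = int ` {..<m}" by (simp add: image_int_atLeastLessThan lessThan_atLeast0)
  then have "(\<Sum>l\<in>{0..<int m}. cyc_char m d l) = (\<Sum>n<m. ?z ^ n)"
    using cyc_char_power[of m d 1] by (simp add: sum.reindex)
  ultimately show ?thesis using geometric_sum[of ?z m] False by simp
qed

lemma finite_cycV [simp]: "finite (cycV m)" and card_cycV [simp]: "card (cycV m) = m"
  by (simp_all add: cycV_def)

lemma cycE_sym: "cycE m a b = cycE m b a"
  by (auto simp: cycE_def)

lemma eq_mod_iff_dvd: "0 \<le> w \<Longrightarrow> w < m \<Longrightarrow> w = y mod m \<longleftrightarrow> m dvd (w - y)"
  for w y m :: int
  using mod_eq_dvd_iff[of w m y] by simp

lemma cyc_neighbours:
  assumes "m \<ge> 3"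
  shows "{w \<in> cycV m. cycE m l w} = {(l + 1) mod int m, (l - 1) mod int m}"
    and "(l + 1) mod int m \<noteq> (l - 1) mod int m"
proof -
  have one: "x mod int m = 1 \<longleftrightarrow> int m dvd (1 - x)" for x
    using eq_mod_iff_dvd[of 1 "int m" x] assms by auto
  have "cycE m l w \<longleftrightarrow> w = (l - 1) mod int m \<or> w = (l + 1) mod int m" if "w \<in> cycV m" for w
  proof -
    have "int m dvd (1 - (l - w)) \<longleftrightarrow> int m dvd (w - (l - 1))"
      using dvd_minus_iff[of "int m" "w - (l - 1)"] by (simp add: algebra_simps)
    moreover have "int m dvd (1 - (w - l)) \<longleftrightarrow> int m dvd (w - (l + 1))"
      using dvd_minus_iff[of "int m" "w - (l + 1)"] by (simp add: algebra_simps)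
    ultimately show ?thesis
      using that eq_mod_iff_dvd[of w "int m"] by (auto simp: cycE_def cycV_def one)
  qed
  moreover have "(l + 1) mod int m \<in> cycV m" "(l - 1) mod int m \<in> cycV m"
    using assms by (auto simp: cycV_def)
  ultimately show "{w \<in> cycV m. cycE m l w} = {(l + 1) mod int m, (l - 1) mod int m}"
    by auto
  show "(l + 1) mod int m \<noteq> (l - 1) mod int m"
  proof
    assume "(l + 1) mod int m = (l - 1) mod int m"
    then have "int m dvd 2" by (simp add: mod_eq_dvd_iff)
    then show False using zdvd_imp_le[of "int m" 2] assms by simp
  qed
qed

definition cyc_basis :: "nat \<Rightarrow> int \<Rightarrow> int \<Rightarrow> complex" where
  "cyc_basis m k = (\<lambda>l. if l \<in> cycV m then cyc_char m k l / complex_of_real (sqrt (real m)) else 0)"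

definition cyc_eigval :: "nat \<Rightarrow> int \<Rightarrow> real" where
  "cyc_eigval m k = 2 - 2 * cos (2 * pi * of_int k / of_nat m)"

lemma cyc_basis_eigen:
  assumes "m \<ge> 3"
  shows "Lap (cycV m) (cycE m) (cyc_basis m k) = fscale (complex_of_real (cyc_eigval m k)) (cyc_basis m k)"
proof
  fix l
  show "Lap (cycV m) (cycE m) (cyc_basis m k) l = fscale (complex_of_real (cyc_eigval m k)) (cyc_basis m k) l"
  proof (cases "l \<in> cycV m")
    case True
    have m0: "m > 0" using assms by simp
    have nbrs: "(l + 1) mod int m \<in> cycV m" "(l - 1) mod int m \<in> cycV m"
      using m0 by (auto simp: cycV_def)
    have pm1: "cyc_char m k 1 + cyc_char m k (-1) = complex_of_real (2 * cos (2 * pi * of_int k / of_nat m))"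
      by (simp add: cyc_char_cis complex_eq_iff)
    have "Lap (cycV m) (cycE m) (cyc_basis m k) l
        = (cyc_basis m k l - cyc_basis m k ((l + 1) mod int m))
          + (cyc_basis m k l - cyc_basis m k ((l - 1) mod int m))"
      using True cyc_neighbours[OF assms, of l] by (simp add: Lap_def)
    also have "\<dots> = cyc_basis m k l * (2 - (cyc_char m k 1 + cyc_char m k (-1)))"
      using True nbrs m0 by (simp add: cyc_basis_def cyc_char_mod cyc_char_add cyc_char_diff field_simps)
    finally show ?thesis using True by (simp add: pm1 cyc_eigval_def fscale_def mult.commute)
  qed (simp add: Lap_def fscale_def cyc_basis_def)
qed

lemma inner_l2_cyc_basis:
  assumes "m > 0"
  shows "inner_l2 (cycV m) (cyc_basis m k) (cyc_basis m k') = (if int m dvd (k - k') then 1 else 0)"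
proof -
  have "(complex_of_real (sqrt (real m)))\<^sup>2 = of_nat m"
    by (simp flip: of_real_power)
  then have "inner_l2 (cycV m) (cyc_basis m k) (cyc_basis m k')
      = (\<Sum>l\<in>{0..<int m}. cyc_char m (k - k') l) / of_nat m"
    unfolding inner_l2_def cyc_basis_def cycV_def
    by (simp add: sum_divide_distrib cyc_char_mult_cnj[symmetric] power2_eq_square[symmetric])
  then show ?thesis using assms by (simp add: sum_cyc_char)
qed

lemma orthonormal_l2_cyc_basis:
  assumes "m > 0" and K: "\<And>k k'. k \<in> K \<Longrightarrow> k' \<in> K \<Longrightarrow> int m dvd (k - k') \<Longrightarrow> k = k'"
  shows "orthonormal_l2 (cycV m) (cyc_basis m) K"
  unfolding orthonormal_l2_def using K by (auto simp: inner_l2_cyc_basis[OF assms(1)])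

lemma cyc_eigenbasis:
  assumes "m \<ge> 3"
  shows "orthonormal_eigenbasis (cycV m) (cycE m) (cyc_basis m) {0..<int m} (cyc_eigval m)"
proof
  show orth: "orthonormal_l2 (cycV m) (cyc_basis m) {0..<int m}"
    using assms by (intro orthonormal_l2_cyc_basis) (auto simp: eq_mod_iff_dvd[symmetric])
  show "cspan (cyc_basis m ` {0..<int m}) = l2 (cycV m)"
    by (rule orthonormal_l2_cspan_eq_l2[OF _ _ orth]) (auto simp: cyc_basis_def l2_def)
qed (use cycE_sym cyc_basis_eigen[OF assms] in auto)

lemma cyc_eigval_bounds: "0 \<le> cyc_eigval m k" "cyc_eigval m k \<le> 4"
  using cos_le_one[of "2 * pi * of_int k / of_nat m"] cos_ge_minus_one[of "2 * pi * of_int k / of_nat m"]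
  unfolding cyc_eigval_def by linarith+

lemma cyc_eigval_eq_0_iff:
  assumes "m > 0" "0 \<le> k" "k < int m"
  shows "cyc_eigval m k = 0 \<longleftrightarrow> k = 0"
proof
  assume "cyc_eigval m k = 0"
  then have "cos (2 * pi * of_int k / of_nat m) = 1" by (simp add: cyc_eigval_def)
  then obtain n :: int where "2 * pi * of_int k / of_nat m = of_int n * 2 * pi"
    by (auto simp: cos_one_2pi_int)
  then have "(of_int k :: real) = of_int (n * int m)" using assms by (simp add: field_simps)
  then have "int m dvd k" by (simp only: of_int_eq_iff) simp
  then show "k = 0" using assms by (simp add: dvd_eq_mod_eq_0)
qed (simp add: cyc_eigval_def)

lemma cyc_eigval_le_2:
  assumes "m > 0" "4 * \<bar>k\<bar> \<le> int m"
  shows "cyc_eigval m k \<le> 2"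
proof -
  define t where "t = 4 * real_of_int k / real m"
  have "\<bar>4 * real_of_int k\<bar> \<le> real m" using assms(2) by linarith
  then have t: "\<bar>t\<bar> \<le> 1" using assms(1) by (simp add: t_def abs_divide divide_le_eq)
  have "\<bar>2 * pi * real_of_int k / real m\<bar> = pi / 2 * \<bar>t\<bar>" by (simp add: t_def abs_mult)
  also have "\<dots> \<le> pi / 2" using mult_left_mono[OF t, of "pi / 2"] by simp
  finally have x: "\<bar>2 * pi * real_of_int k / real m\<bar> \<le> pi / 2" .
  have "0 \<le> cos (2 * pi * real_of_int k / real m)"
    using abs_le_D2[OF x] by (intro cos_ge_zero abs_le_D1[OF x]) linarith
  then show ?thesis by (simp add: cyc_eigval_def)
qed

lemma cyc_eigval_gt_2:
  assumes "int m < 4 * k" "4 * k < 3 * int m"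
  shows "2 < cyc_eigval m k"
proof -
  have m: "real m > 0" using assms by simp
  have "1 < 4 * real_of_int k / real m" "4 * real_of_int k / real m < 3"
    using assms m by (simp_all add: divide_less_eq less_divide_eq)
  then have "pi / 2 < 2 * pi * real_of_int k / real m" "2 * pi * real_of_int k / real m < 3 * pi / 2"
    using mult_strict_left_mono[of 1 "4 * real_of_int k / real m" "pi / 2"]
      mult_strict_left_mono[of "4 * real_of_int k / real m" 3 "pi / 2"] by simp_all
  then have "cos (2 * pi * real_of_int k / real m) < 0" by (intro cos_lt_zero_pi) auto
  then show ?thesis by (simp add: cyc_eigval_def)
qed

lemma Dir_eq_sum_cyc_char: "Dir m n l = (\<Sum>k\<in>{-int n..int n}. cyc_char m k l)"
  by (simp add: Dir_def cyc_char_def)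

lemma poly_coeffs_eq_0_if_many_roots:
  fixes a :: "nat \<Rightarrow> complex"
  assumes "finite Z" "d < card Z" and roots: "\<And>z. z \<in> Z \<Longrightarrow> (\<Sum>n\<le>d. a n * z ^ n) = 0"
  shows "\<forall>n\<le>d. a n = 0"
proof -
  define p where "p = (\<Sum>n\<le>d. monom (a n) n)"
  have coeff_p: "coeff p n = (if n \<le> d then a n else 0)" for n
    by (simp add: p_def coeff_sum coeff_monom)
  have "p = 0"
  proof (rule ccontr)
    assume p0: "p \<noteq> 0"
    have "poly p z = (\<Sum>n\<le>d. a n * z ^ n)" for z by (simp add: p_def poly_sum poly_monom)
    then have "Z \<subseteq> {z. poly p z = 0}" using roots by auto
    then have "card Z \<le> card {z. poly p z = 0}" using card_mono[OF poly_roots_finite[OF p0]] by blast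
    also have "\<dots> \<le> degree p" by (rule card_poly_roots_bound[OF p0])
    also have "\<dots> \<le> d" by (rule degree_le) (simp add: coeff_p)
    finally show False using assms(2) by simp
  qed
  then show ?thesis using coeff_p by (metis coeff_0)
qed

section \<open>The cube\<close>

lemma cubeE_sym: "cubeE N v w = cubeE N w v"
  unfolding cubeE_def by metis

lemma cubeE_irrefl: "\<not> cubeE N v v"
  by (simp add: cubeE_def)

lemma cubeV_eq_image_Pow: "cubeV N = (\<lambda>S i. i \<in> S) ` Pow {..<N}"
proof
  show "cubeV N \<subseteq> (\<lambda>S i. i \<in> S) ` Pow {..<N}"
  proof
    fix v assume "v \<in> cubeV N"
    then have "v = (\<lambda>i. i \<in> {i. v i})" "{i. v i} \<in> Pow {..<N}"
      by (auto simp: cubeV_def not_le[symmetric])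
    then show "v \<in> (\<lambda>S i. i \<in> S) ` Pow {..<N}" by blast
  qed
qed (auto simp: cubeV_def)

lemma finite_cubeV [simp]: "finite (cubeV N)"
  by (simp add: cubeV_eq_image_Pow)

lemma card_cubeV: "card (cubeV N) = 2 ^ N"
proof -
  have "inj_on (\<lambda>S i. i \<in> S) (Pow {..<N})" by (auto simp: inj_on_def fun_eq_iff)
  then show ?thesis by (simp add: cubeV_eq_image_Pow card_image card_Pow)
qed

lemma norm2_l2_Qop:
  assumes "finite C" "0 \<in> C"
  shows "norm2_l2 (A \<times> C) (Qop f) = norm2_l2 A (\<lambda>u. f (u, 0))"
proof -
  have "norm2_l2 (A \<times> C) (Qop f) = (\<Sum>u\<in>A. \<Sum>l\<in>C. if l = 0 then (cmod (f (u, 0)))^2 else 0)"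
    unfolding norm2_l2_def sum.cartesian_product' by (intro sum.cong refl) (auto simp: Qop_def)
  then show ?thesis using assms by (simp add: norm2_l2_def)
qed

lemma inner_l2_Qop_tensor:
  assumes "finite C" "0 \<in> C"
  shows "inner_l2 (A \<times> C) (Qop f) (\<lambda>(u, l). if (u, l) \<in> A \<times> C then \<phi> l * g u else 0)
    = cnj (\<phi> 0) * inner_l2 A (\<lambda>u. f (u, 0)) g"
proof -
  have "inner_l2 (A \<times> C) (Qop f) (\<lambda>(u, l). if (u, l) \<in> A \<times> C then \<phi> l * g u else 0)
      = (\<Sum>u\<in>A. \<Sum>l\<in>C. if l = 0 then f (u, 0) * cnj (\<phi> 0 * g u) else 0)"
    unfolding inner_l2_def sum.cartesian_product' by (intro sum.cong refl) (auto simp: Qop_def)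
  also have "\<dots> = cnj (\<phi> 0) * inner_l2 A (\<lambda>u. f (u, 0)) g"
    using assms by (simp add: inner_l2_def sum_distrib_left algebra_simps)
  finally show ?thesis .
qed

lemma parseval_orthonormal_l2:
  assumes "finite I" "orthonormal_l2 V b I" "f \<in> cspan (b ` I)"
  shows "(\<Sum>i\<in>I. (cmod (inner_l2 V f (b i)))^2) = norm2_l2 V f"
  using norm2_l2_lincomb_orthonormal[OF assms(1,2)] orthonormal_l2_expansion[OF assms] by metis

lemma Qop_parseval:
  assumes "finite C" "0 \<in> C" "finite I" "orthonormal_l2 A g I"
    and "(\<lambda>u. f (u, 0)) \<in> cspan (g ` I)"
  shows "(\<Sum>i\<in>I. (cmod (inner_l2 (A \<times> C) (Qop f)
            (\<lambda>(u, l). if (u, l) \<in> A \<times> C then \<phi> l * g i u else 0)))^2)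
    = (cmod (\<phi> 0))^2 * norm2_l2 (A \<times> C) (Qop f)"
proof -
  have "(\<Sum>i\<in>I. (cmod (inner_l2 (A \<times> C) (Qop f)
            (\<lambda>(u, l). if (u, l) \<in> A \<times> C then \<phi> l * g i u else 0)))^2)
      = (\<Sum>i\<in>I. (cmod (\<phi> 0))^2 * (cmod (inner_l2 A (\<lambda>u. f (u, 0)) (g i)))^2)"
    by (simp only: inner_l2_Qop_tensor[OF assms(1,2)] norm_mult complex_mod_cnj power_mult_distrib)
  then show ?thesis
    by (simp add: parseval_orthonormal_l2[OF assms(3-5)] norm2_l2_Qop[OF assms(1,2)]
        flip: sum_distrib_left)
qed

section \<open>The product \<open>\<B>\<^sub>N \<box> \<C>\<^sub>m\<close>\<close>

locale cube_cycle =
  fixes N m K :: nat and \<psi> :: "nat \<Rightarrow> nat \<Rightarrow> (nat \<Rightarrow> bool) \<Rightarrow> complex"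
  assumes m_ge_3: "m \<ge> 3" and K_pos: "0 < K" and K_less_N: "K < N"
    and \<psi>_onb: "\<And>\<kappa>. \<kappa> \<le> N \<Longrightarrow>
       is_onb (cubeV N) (eigsp (cubeV N) (cubeE N) (2 * real \<kappa>)) (\<psi> \<kappa>) {1..N choose \<kappa>}"
begin

lemma m_pos: "m > 0"
  using m_ge_3 by simp

lemma \<psi>_cspan: "\<kappa> \<le> N \<Longrightarrow> cspan (\<psi> \<kappa> ` {1..N choose \<kappa>}) = eigsp (cubeV N) (cubeE N) (2 * real \<kappa>)"
  using \<psi>_onb by (simp add: is_onb_iff)

lemma \<psi>_orthonormal: "\<kappa> \<le> N \<Longrightarrow> orthonormal_l2 (cubeV N) (\<psi> \<kappa>) {1..N choose \<kappa>}"
  using \<psi>_onb by (simp add: is_onb_iff)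

lemma \<psi>_in_eigsp:
  assumes "\<kappa> \<le> N" "\<nu> \<in> {1..N choose \<kappa>}"
  shows "\<psi> \<kappa> \<nu> \<in> eigsp (cubeV N) (cubeE N) (2 * real \<kappa>)"
  using \<psi>_cspan[OF assms(1)] cfun.span_base[of "\<psi> \<kappa> \<nu>"] assms(2) by auto

lemma \<psi>_vanishes: "\<kappa> \<le> N \<Longrightarrow> \<nu> \<in> {1..N choose \<kappa>} \<Longrightarrow> u \<notin> cubeV N \<Longrightarrow> \<psi> \<kappa> \<nu> u = 0"
  using \<psi>_in_eigsp by (auto simp: eigsp_def l2_def)

definition cube_index :: "(nat \<times> nat) set" where
  "cube_index = (SIGMA \<kappa>:{..N}. {1..N choose \<kappa>})"

lemma finite_cube_index [simp]: "finite cube_index"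
  by (simp add: cube_index_def)

lemma orthonormal_l2_cube: "orthonormal_l2 (cubeV N) (case_prod \<psi>) cube_index"
  unfolding orthonormal_l2_def
proof (intro ballI)
  fix i j assume i: "i \<in> cube_index" and j: "j \<in> cube_index"
  obtain \<kappa> \<nu> \<kappa>' \<nu>' where ij: "i = (\<kappa>, \<nu>)" "j = (\<kappa>', \<nu>')" by force
  show "inner_l2 (cubeV N) (case_prod \<psi> i) (case_prod \<psi> j) = (if i = j then 1 else 0)"
  proof (cases "\<kappa> = \<kappa>'")
    case True
    then show ?thesis
      using i j \<psi>_orthonormal[of \<kappa>] unfolding orthonormal_l2_def by (auto simp: ij cube_index_def)
  next
    case False
    have "Lap (cubeV N) (cubeE N) (\<psi> \<kappa> \<nu>) = fscale (complex_of_real (2 * real \<kappa>)) (\<psi> \<kappa> \<nu>)"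
        "Lap (cubeV N) (cubeE N) (\<psi> \<kappa>' \<nu>') = fscale (complex_of_real (2 * real \<kappa>')) (\<psi> \<kappa>' \<nu>')"
      using i j \<psi>_in_eigsp by (auto simp: ij cube_index_def eigsp_def)
    then have "inner_l2 (cubeV N) (\<psi> \<kappa> \<nu>) (\<psi> \<kappa>' \<nu>') = 0"
      by (rule eigenvectors_orthogonal[OF finite_cubeV cubeE_sym]) (use False in simp)
    then show ?thesis using False by (simp add: ij)
  qed
qed

text \<open>The hypothesis only provides orthonormal bases of the individual eigenspaces of \<open>\<B>\<^sub>N\<close>;
  since \<open>\<Sum>\<^sub>\<kappa> (N choose \<kappa>) = 2\<^sup>N = |\<B>\<^sub>N|\<close>, together they exhaust \<open>\<ell>\<^sup>2(\<B>\<^sub>N)\<close>.\<close>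

lemma cube_eigenbasis:
  "orthonormal_eigenbasis (cubeV N) (cubeE N) (case_prod \<psi>) cube_index (\<lambda>(\<kappa>, \<nu>). 2 * real \<kappa>)"
proof
  show "orthonormal_l2 (cubeV N) (case_prod \<psi>) cube_index" by (rule orthonormal_l2_cube)
  show "cspan (case_prod \<psi> ` cube_index) = l2 (cubeV N)"
    using \<psi>_in_eigsp
    by (intro orthonormal_l2_cspan_eq_l2[OF _ _ orthonormal_l2_cube])
      (auto simp: cube_index_def eigsp_def card_SigmaI choose_row_sum card_cubeV)
  show "Lap (cubeV N) (cubeE N) (case_prod \<psi> i)
      = fscale (complex_of_real ((\<lambda>(\<kappa>, \<nu>). 2 * real \<kappa>) i)) (case_prod \<psi> i)"
    if "i \<in> cube_index" for i
    using that \<psi>_in_eigsp by (auto simp: cube_index_def eigsp_def)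
qed (simp_all add: cubeE_sym)

abbreviation prod_basis :: "(nat \<times> nat) \<times> int \<Rightarrow> (nat \<Rightarrow> bool) \<times> int \<Rightarrow> complex" where
  "prod_basis \<equiv> \<lambda>(i, k). tensor (case_prod \<psi> i) (cyc_basis m k)"

abbreviation prod_eigval :: "(nat \<times> nat) \<times> int \<Rightarrow> real" where
  "prod_eigval \<equiv> \<lambda>(i, k). (\<lambda>(\<kappa>, \<nu>). 2 * real \<kappa>) i + cyc_eigval m k"

sublocale cube: orthonormal_eigenbasis "cubeV N" "cubeE N" "case_prod \<psi>" cube_index
    "\<lambda>(\<kappa>, \<nu>). 2 * real \<kappa>"
  by (rule cube_eigenbasis)

sublocale cyc: orthonormal_eigenbasis "cycV m" "cycE m" "cyc_basis m" "{0..<int m}" "cyc_eigval m"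
  by (rule cyc_eigenbasis[OF m_ge_3])

sublocale prod: orthonormal_eigenbasis "cubeV N \<times> cycV m" "prodE (cubeE N) (cycE m)"
  prod_basis "cube_index \<times> {0..<int m}" prod_eigval
  using cube_eigenbasis cyc_eigenbasis[OF m_ge_3]
  by (rule orthonormal_eigenbasis_tensor)
    (simp_all add: cubeE_irrefl card_cartesian_product card_cubeV cube_index_def card_SigmaI
      choose_row_sum)

definition low_index :: "(nat \<times> nat) set" where
  "low_index = (SIGMA \<kappa>:{..<K - 1}. {1..N choose \<kappa>})"

definition modes_low :: "((nat \<times> nat) \<times> int) set" where
  "modes_low = low_index \<times> {0..<int m}"

definition modes_mid :: "((nat \<times> nat) \<times> int) set" where
  "modes_mid = ({K - 1} \<times> {1..N choose (K - 1)}) \<times> {k\<in>{0..<int m}. cyc_eigval m k \<le> 2}"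

definition modes_top :: "((nat \<times> nat) \<times> int) set" where
  "modes_top = ({K} \<times> {1..N choose K}) \<times> {0}"

lemma modes_subset: "modes_low \<subseteq> cube_index \<times> {0..<int m}" "modes_mid \<subseteq> cube_index \<times> {0..<int m}"
    "modes_top \<subseteq> cube_index \<times> {0..<int m}"
  using K_less_N m_pos
  by (auto simp: modes_low_def modes_mid_def modes_top_def low_index_def cube_index_def)

lemma finite_modes [simp]: "finite modes_low" "finite modes_mid" "finite modes_top"
  using modes_subset finite_subset[OF _ prod.finite_I] by blast+

lemma modes_disjoint: "modes_low \<inter> modes_mid = {}" "modes_low \<inter> modes_top = {}"
    "modes_mid \<inter> modes_top = {}"
  using K_pos by (auto simp: modes_low_def modes_mid_def modes_top_def low_index_def)

lemma modes_below_2K: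
  "{p \<in> cube_index \<times> {0..<int m}. prod_eigval p \<le> 2 * real K} = modes_low \<union> modes_mid \<union> modes_top"
proof (intro set_eqI iffI)
  fix p assume "p \<in> {p \<in> cube_index \<times> {0..<int m}. prod_eigval p \<le> 2 * real K}"
  then obtain \<kappa> \<nu> k where p: "p = ((\<kappa>, \<nu>), k)" and \<nu>: "\<nu> \<in> {1..N choose \<kappa>}"
    and k: "k \<in> {0..<int m}" and le: "2 * real \<kappa> + cyc_eigval m k \<le> 2 * real K"
    by (auto simp: cube_index_def)
  have bounds: "0 \<le> cyc_eigval m k" "cyc_eigval m k \<le> 4" by (rule cyc_eigval_bounds)+
  consider "\<kappa> + 2 \<le> K" | "\<kappa> + 1 = K" "cyc_eigval m k \<le> 2" | "\<kappa> = K" "cyc_eigval m k = 0"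
    using le bounds by linarith
  then show "p \<in> modes_low \<union> modes_mid \<union> modes_top"
  proof cases
    case 3
    then have "k = 0" using cyc_eigval_eq_0_iff[OF m_pos] k by auto
    then show ?thesis using p \<nu> 3 by (auto simp: modes_top_def)
  qed (use p \<nu> k in \<open>auto simp: modes_low_def modes_mid_def low_index_def\<close>)
next
  fix p assume p: "p \<in> modes_low \<union> modes_mid \<union> modes_top"
  obtain \<kappa> \<nu> k where pe: "p = ((\<kappa>, \<nu>), k)" by (metis prod.collapse)
  have "\<kappa> < K - 1 \<or> (\<kappa> = K - 1 \<and> cyc_eigval m k \<le> 2) \<or> (\<kappa> = K \<and> k = 0)"
    using p by (auto simp: pe modes_low_def modes_mid_def modes_top_def low_index_def)
  then have "prod_eigval p \<le> 2 * real K"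
    using cyc_eigval_bounds[of m k] K_pos by (auto simp: pe cyc_eigval_def of_nat_diff)
  then show "p \<in> {p \<in> cube_index \<times> {0..<int m}. prod_eigval p \<le> 2 * real K}"
    using p modes_subset by blast
qed

lemma PW_prod_2K:
  "PW (cubeV N \<times> cycV m) (prodE (cubeE N) (cycE m)) (2 * real K)
    = cspan (prod_basis ` (modes_low \<union> modes_mid \<union> modes_top))"
  by (simp only: prod.PW_eq_cspan modes_below_2K)

lemma modes_cspan_orthogonal:
  assumes "J \<subseteq> cube_index \<times> {0..<int m}" "J' \<subseteq> cube_index \<times> {0..<int m}" "J \<inter> J' = {}"
    and "a \<in> cspan (prod_basis ` J)" "b \<in> cspan (prod_basis ` J')"
  shows "inner_l2 (cubeV N \<times> cycV m) a b = 0"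
  using prod.orthonormal assms finite_subset[OF _ prod.finite_I]
  by (intro orthonormal_l2_cspan_orthogonal) auto

lemma cdim_modes:
  assumes "J \<subseteq> cube_index \<times> {0..<int m}"
  shows "cdim (cspan (prod_basis ` J)) = card J"
proof -
  have fin: "finite J" using finite_subset[OF assms prod.finite_I] .
  show ?thesis
    using cdim_cspan_family_independent[OF fin orthonormal_l2_family_independent[OF fin
          orthonormal_l2_subset[OF prod.orthonormal assms]]] .
qed

lemma cube_PW_low: "PW (cubeV N) (cubeE N) (2 * real K - 4) = cspan (case_prod \<psi> ` low_index)"
proof -
  have "{i \<in> cube_index. (\<lambda>(\<kappa>, \<nu>). 2 * real \<kappa>) i \<le> 2 * real K - 4} = low_index"
    using K_pos K_less_N by (auto simp: cube_index_def low_index_def)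
  then show ?thesis by (simp only: cube.PW_eq_cspan)
qed

lemma low_space_eq: "tens (PW (cubeV N) (cubeE N) (2 * real K - 4)) (l2 (cycV m)) = cspan (prod_basis ` modes_low)"
  unfolding cube_PW_low cyc.cspan_eq[symmetric] modes_low_def
  by (rule tens_cspan) (simp_all add: low_index_def)

lemma image_case_prod_\<psi>: "case_prod \<psi> ` ({\<kappa>} \<times> B) = \<psi> \<kappa> ` B"
  by (auto simp: image_iff)

lemma mid_space_eq:
  "tens (eigsp (cubeV N) (cubeE N) (2 * real K - 2)) (PW (cycV m) (cycE m) 2)
    = cspan (prod_basis ` modes_mid)"
proof -
  have "eigsp (cubeV N) (cubeE N) (2 * real K - 2)
      = cspan (case_prod \<psi> ` ({K - 1} \<times> {1..N choose (K - 1)}))"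
    unfolding image_case_prod_\<psi> using \<psi>_cspan[of "K - 1"] K_less_N K_pos by (simp add: of_nat_diff)
  then show ?thesis
    unfolding cyc.PW_eq_cspan modes_mid_def
    by (simp only:) (rule tens_cspan; auto intro: finite_subset[of _ "{0..<int m}"])
qed

lemma top_space_eq:
  "tens (eigsp (cubeV N) (cubeE N) (2 * real K)) (eigsp (cycV m) (cycE m) 0)
    = cspan (prod_basis ` modes_top)"
proof -
  have "eigsp (cubeV N) (cubeE N) (2 * real K) = cspan (case_prod \<psi> ` ({K} \<times> {1..N choose K}))"
    unfolding image_case_prod_\<psi> using \<psi>_cspan[of K] K_less_N by simp
  moreover have "{k \<in> {0..<int m}. cyc_eigval m k = 0} = {0}"
    using cyc_eigval_eq_0_iff[OF m_pos] m_pos by auto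
  ultimately show ?thesis
    unfolding cyc.eigsp_eq_cspan modes_top_def by (simp only:) (rule tens_cspan; simp)
qed

lemma PW_prod_decomposition:
  "PW (cubeV N \<times> cycV m) (prodE (cubeE N) (cycE m)) (2 * real K)
    = {a + b + c | a b c. a \<in> tens (PW (cubeV N) (cubeE N) (2 * real K - 4)) (l2 (cycV m))
        \<and> b \<in> tens (eigsp (cubeV N) (cubeE N) (2 * real K - 2)) (PW (cycV m) (cycE m) 2)
        \<and> c \<in> tens (eigsp (cubeV N) (cubeE N) (2 * real K)) (eigsp (cycV m) (cycE m) 0)}"
  unfolding PW_prod_2K low_space_eq mid_space_eq top_space_eq image_Un cfun.span_Un by blast

lemma
  shows low_mid_orthogonal: "a \<in> tens (PW (cubeV N) (cubeE N) (2 * real K - 4)) (l2 (cycV m))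
      \<Longrightarrow> b \<in> tens (eigsp (cubeV N) (cubeE N) (2 * real K - 2)) (PW (cycV m) (cycE m) 2)
      \<Longrightarrow> inner_l2 (cubeV N \<times> cycV m) a b = 0"
    and low_top_orthogonal: "a \<in> tens (PW (cubeV N) (cubeE N) (2 * real K - 4)) (l2 (cycV m))
      \<Longrightarrow> c \<in> tens (eigsp (cubeV N) (cubeE N) (2 * real K)) (eigsp (cycV m) (cycE m) 0)
      \<Longrightarrow> inner_l2 (cubeV N \<times> cycV m) a c = 0"
    and mid_top_orthogonal: "b \<in> tens (eigsp (cubeV N) (cubeE N) (2 * real K - 2)) (PW (cycV m) (cycE m) 2)
      \<Longrightarrow> c \<in> tens (eigsp (cubeV N) (cubeE N) (2 * real K)) (eigsp (cycV m) (cycE m) 0)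
      \<Longrightarrow> inner_l2 (cubeV N \<times> cycV m) b c = 0"
  using modes_subset modes_disjoint
  unfolding low_space_eq mid_space_eq top_space_eq
  by (auto intro: modes_cspan_orthogonal)

lemma cdim_low_space:
  "cdim (tens (PW (cubeV N) (cubeE N) (2 * real K - 4)) (l2 (cycV m))) = m * (\<Sum>\<kappa><K - 1. N choose \<kappa>)"
  unfolding low_space_eq cdim_modes[OF modes_subset(1)]
  by (simp add: modes_low_def low_index_def card_cartesian_product card_SigmaI)

lemma cdim_top_space:
  "cdim (tens (eigsp (cubeV N) (cubeE N) (2 * real K)) (eigsp (cycV m) (cycE m) 0)) = N choose K"
  unfolding top_space_eq cdim_modes[OF modes_subset(3)]
  by (simp add: modes_top_def card_cartesian_product)

lemma orthonormal_l2_low_index: "orthonormal_l2 (cubeV N) (case_prod \<psi>) low_index"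
  using orthonormal_l2_cube
  by (rule orthonormal_l2_subset) (use K_less_N in \<open>auto simp: low_index_def cube_index_def\<close>)

lemma low_space_onb_tensor:
  "is_onb (cubeV N \<times> cycV m) (tens (PW (cubeV N) (cubeE N) (2 * real K - 4)) (l2 (cycV m)))
     (\<lambda>(i, j). tensor (case_prod \<psi> i) (\<lambda>l. if l = j then 1 else 0)) (low_index \<times> cycV m)"
proof -
  have "tens (PW (cubeV N) (cubeE N) (2 * real K - 4)) (l2 (cycV m))
      = cspan ((\<lambda>(i, j). tensor (case_prod \<psi> i) (\<lambda>l. if l = j then 1 else 0)) ` (low_index \<times> cycV m))"
    unfolding cube_PW_low cspan_indicators_eq_l2[OF finite_cycV, symmetric]
    by (rule tens_cspan) (simp_all add: low_index_def)
  moreover have "orthonormal_l2 (cubeV N \<times> cycV m)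
      (\<lambda>(i, j). tensor (case_prod \<psi> i) (\<lambda>l. if l = j then 1 else 0)) (low_index \<times> cycV m)"
    by (rule orthonormal_l2_tensor[OF finite_cubeV finite_cycV orthonormal_l2_low_index
          orthonormal_l2_indicators[OF finite_cycV]])
  ultimately show ?thesis by (simp add: is_onb_iff)
qed

lemma low_space_onb:
  "is_onb (cubeV N \<times> cycV m) (tens (PW (cubeV N) (cubeE N) (2 * real K - 4)) (l2 (cycV m)))
     (\<lambda>(j, \<kappa>, \<nu>). \<lambda>(u, l). if (u, l) \<in> cubeV N \<times> cycV m then delta0 ((l - j) mod int m) * \<psi> \<kappa> \<nu> u else 0)
     ({0..<int m} \<times> (SIGMA \<kappa>:{..<K - 1}. {1..N choose \<kappa>}))"
proof (rule is_onb_reindex[OF low_space_onb_tensor])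
  show "bij_betw (\<lambda>(j, i). (i, j)) ({0..<int m} \<times> (SIGMA \<kappa>:{..<K - 1}. {1..N choose \<kappa>}))
      (low_index \<times> cycV m)"
    by (auto simp: bij_betw_def inj_on_def image_iff low_index_def cycV_def)
  fix p assume "p \<in> {0..<int m} \<times> (SIGMA \<kappa>:{..<K - 1}. {1..N choose \<kappa>})"
  then obtain j \<kappa> \<nu> where p: "p = (j, \<kappa>, \<nu>)" and j: "j \<in> cycV m" and \<kappa>: "\<kappa> \<le> N"
    and \<nu>: "\<nu> \<in> {1..N choose \<kappa>}"
    using K_less_N by (auto simp: cycV_def)
  have delta: "delta0 ((l - j) mod int m) = (if l = j then 1 else 0)" if "l \<in> cycV m" for l
    using that j mod_eq_dvd_iff[of l "int m" j] by (auto simp: cycV_def delta0_def dvd_eq_mod_eq_0)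
  show "(\<lambda>(j, \<kappa>, \<nu>). \<lambda>(u, l). if (u, l) \<in> cubeV N \<times> cycV m then delta0 ((l - j) mod int m) * \<psi> \<kappa> \<nu> u else 0) p
      = (\<lambda>(i, j). tensor (case_prod \<psi> i) (\<lambda>l. if l = j then 1 else 0)) ((\<lambda>(j, i). (i, j)) p)"
  proof (rule ext, clarify)
    fix u l
    show "(\<lambda>(j, \<kappa>, \<nu>). \<lambda>(u, l). if (u, l) \<in> cubeV N \<times> cycV m then delta0 ((l - j) mod int m) * \<psi> \<kappa> \<nu> u else 0) p (u, l)
      = (\<lambda>(i, j). tensor (case_prod \<psi> i) (\<lambda>l. if l = j then 1 else 0)) ((\<lambda>(j, i). (i, j)) p) (u, l)"
      using delta[of l] j \<psi>_vanishes[OF \<kappa> \<nu>, of u] by (auto simp: p tensor_def)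
  qed
qed

lemma top_space_onb:
  "is_onb (cubeV N \<times> cycV m) (tens (eigsp (cubeV N) (cubeE N) (2 * real K)) (eigsp (cycV m) (cycE m) 0))
     (\<lambda>\<nu>. \<lambda>(u, l). if (u, l) \<in> cubeV N \<times> cycV m then \<psi> K \<nu> u / complex_of_real (sqrt (real m)) else 0)
     {1..N choose K}"
proof (rule is_onb_reindex)
  show "is_onb (cubeV N \<times> cycV m) (tens (eigsp (cubeV N) (cubeE N) (2 * real K)) (eigsp (cycV m) (cycE m) 0))
      prod_basis modes_top"
    unfolding is_onb_iff top_space_eq
    using orthonormal_l2_subset[OF prod.orthonormal modes_subset(3)] by simp
  show "bij_betw (\<lambda>\<nu>. ((K, \<nu>), 0)) {1..N choose K} modes_top"
    by (auto simp: bij_betw_def inj_on_def modes_top_def)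
  fix \<nu> assume "\<nu> \<in> {1..N choose K}"
  then show "(\<lambda>\<nu>. \<lambda>(u, l). if (u, l) \<in> cubeV N \<times> cycV m then \<psi> K \<nu> u / complex_of_real (sqrt (real m)) else 0) \<nu>
      = prod_basis ((\<lambda>\<nu>. ((K, \<nu>), 0)) \<nu>)"
    using \<psi>_vanishes[of K \<nu>] K_less_N by (auto simp: tensor_def cyc_basis_def fun_eq_iff)
qed

lemma low_space_Qop:
  assumes "f \<in> tens (PW (cubeV N) (cubeE N) (2 * real K - 4)) (l2 (cycV m))"
  shows "norm2_l2 (cubeV N \<times> cycV m) (Qop f) =
    (\<Sum>\<kappa><K - 1. \<Sum>\<nu>\<in>{1..N choose \<kappa>}.
       (cmod (inner_l2 (cubeV N \<times> cycV m) (Qop f)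
          (\<lambda>(u, l). if (u, l) \<in> cubeV N \<times> cycV m then delta0 l * \<psi> \<kappa> \<nu> u else 0)))^2)"
proof -
  let ?G = "\<lambda>g. (cmod (inner_l2 (cubeV N \<times> cycV m) (Qop f)
          (\<lambda>(u, l). if (u, l) \<in> cubeV N \<times> cycV m then delta0 l * g u else 0)))^2"
  have "(\<Sum>i\<in>low_index. ?G (case_prod \<psi> i)) = (cmod (delta0 0))^2 * norm2_l2 (cubeV N \<times> cycV m) (Qop f)"
    using assms m_pos K_less_N unfolding cube_PW_low
    by (intro Qop_parseval tens_slice_in[OF cfun.subspace_span] orthonormal_l2_low_index)
      (auto simp: cycV_def low_index_def)
  moreover have "(\<Sum>i\<in>low_index. ?G (case_prod \<psi> i)) = (\<Sum>(\<kappa>, \<nu>)\<in>low_index. ?G (\<psi> \<kappa> \<nu>))"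
    by (intro sum.cong refl) clarsimp
  also have "\<dots> = (\<Sum>\<kappa><K - 1. \<Sum>\<nu>\<in>{1..N choose \<kappa>}. ?G (\<psi> \<kappa> \<nu>))"
    unfolding low_index_def by (rule sum.Sigma[symmetric]) auto
  ultimately show ?thesis by (simp add: delta0_def)
qed

lemma eigsp_Qop_parseval:
  assumes "\<kappa> \<le> N" "f \<in> tens (eigsp (cubeV N) (cubeE N) (2 * real \<kappa>)) Y"
  shows "(\<Sum>\<nu>\<in>{1..N choose \<kappa>}. (cmod (inner_l2 (cubeV N \<times> cycV m) (Qop f)
            (\<lambda>(u, l). if (u, l) \<in> cubeV N \<times> cycV m then \<phi> l * \<psi> \<kappa> \<nu> u else 0)))^2)
    = (cmod (\<phi> 0))^2 * norm2_l2 (cubeV N \<times> cycV m) (Qop f)"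
proof (rule Qop_parseval[OF finite_cycV _ _ \<psi>_orthonormal[OF assms(1)]])
  show "(\<lambda>u. f (u, 0)) \<in> cspan (\<psi> \<kappa> ` {1..N choose \<kappa>})"
  proof (rule tens_slice_in[OF cfun.subspace_span])
    show "f \<in> tens (cspan (\<psi> \<kappa> ` {1..N choose \<kappa>})) Y" using assms \<psi>_cspan by simp
  qed
qed (use m_pos in \<open>simp_all add: cycV_def\<close>)

lemma top_space_Qop:
  assumes "f \<in> tens (eigsp (cubeV N) (cubeE N) (2 * real K)) (eigsp (cycV m) (cycE m) 0)"
  shows "(1 / real m) * norm2_l2 (cubeV N \<times> cycV m) (Qop f) =
    (\<Sum>\<nu>\<in>{1..N choose K}. (cmod (inner_l2 (cubeV N \<times> cycV m) (Qop f)
       (\<lambda>(u, l). if (u, l) \<in> cubeV N \<times> cycV m then \<psi> K \<nu> u / complex_of_real (sqrt (real m)) else 0)))^2)"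
proof -
  have "(\<lambda>(u, l). if (u, l) \<in> cubeV N \<times> cycV m then \<psi> K \<nu> u / complex_of_real (sqrt (real m)) else 0)
      = (\<lambda>(u, l). if (u, l) \<in> cubeV N \<times> cycV m
           then (\<lambda>_. 1 / complex_of_real (sqrt (real m))) l * \<psi> K \<nu> u else 0)" for \<nu>
    by (auto simp: fun_eq_iff)
  moreover have "(cmod (1 / complex_of_real (sqrt (real m))))^2 = 1 / real m"
    by (simp add: norm_divide power_divide)
  ultimately show ?thesis
    using eigsp_Qop_parseval[OF less_imp_le[OF K_less_N] assms] by simp
qed

context
  fixes m' :: nat
  assumes m_eq: "m = 4 * m' + 1"
begin

definition dir_freqs :: "int set" where
  "dir_freqs = {-int m'..int m'}"

definition dir_shifts :: "int set" where
  "dir_shifts = {0..(int m - 1) div 2}"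

definition dir_translate :: "int \<Rightarrow> int \<Rightarrow> complex" where
  "dir_translate j = (\<lambda>l. if l \<in> cycV m then Dbar m m' (l - 2 * j) else 0)"

definition dir_coeff :: "int \<Rightarrow> int \<Rightarrow> complex" where
  "dir_coeff j k = cyc_char m k (- (2 * j)) / complex_of_real (sqrt (2 * real m' + 1))"

definition mid_family :: "int \<times> nat \<Rightarrow> (nat \<Rightarrow> bool) \<times> int \<Rightarrow> complex" where
  "mid_family = (\<lambda>(j, \<nu>). \<lambda>(u, l). if (u, l) \<in> cubeV N \<times> cycV m
     then Dbar m m' (l - 2 * j) * \<psi> (K - 1) \<nu> u else 0)"

lemma dir_shifts_eq: "dir_shifts = int ` {..2 * m'}"
proof -
  have "(int m - 1) div 2 = 2 * int m'" using m_eq by simp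
  then show ?thesis by (simp add: dir_shifts_def image_int_atLeastAtMost atLeast0AtMost[symmetric])
qed

lemma finite_dir_sets [simp]: "finite dir_freqs" "finite dir_shifts"
  by (simp_all add: dir_freqs_def dir_shifts_def)

lemma card_dir_freqs: "card dir_freqs = 2 * m' + 1"
  by (simp add: dir_freqs_def)

lemma card_dir_shifts: "card dir_shifts = 2 * m' + 1"
  by (simp add: dir_shifts_eq card_image)

lemma dir_freqs_dvd_imp_eq:
  assumes "k \<in> dir_freqs" "k' \<in> dir_freqs" "int m dvd (k - k')"
  shows "k = k'"
proof (rule ccontr)
  assume "k \<noteq> k'"
  then have "\<bar>int m\<bar> \<le> \<bar>k - k'\<bar>" using dvd_imp_le_int[OF _ assms(3)] by simp
  then show False using assms(1,2) m_eq by (auto simp: dir_freqs_def)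
qed

lemma dir_translate_eq_lincomb: "dir_translate j = lincomb (dir_coeff j) (cyc_basis m) dir_freqs"
proof
  fix l
  show "dir_translate j l = lincomb (dir_coeff j) (cyc_basis m) dir_freqs l"
  proof (cases "l \<in> cycV m")
    case True
    have "complex_of_real (sqrt (real m * (2 * real m' + 1)))
        = complex_of_real (sqrt (real m)) * complex_of_real (sqrt (2 * real m' + 1))"
      by (simp add: real_sqrt_mult)
    then have "dir_translate j l = (\<Sum>k\<in>dir_freqs. cyc_char m k (l - 2 * j))
        / (complex_of_real (sqrt (real m)) * complex_of_real (sqrt (2 * real m' + 1)))"
      using True by (simp add: dir_translate_def Dbar_def Dir_eq_sum_cyc_char dir_freqs_def)
    also have "\<dots> = (\<Sum>k\<in>dir_freqs. dir_coeff j k * cyc_basis m k l)"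
      using True by (simp add: sum_divide_distrib dir_coeff_def cyc_basis_def cyc_char_diff mult.commute)
    finally show ?thesis by (simp add: lincomb_def)
  qed (simp add: dir_translate_def lincomb_def cyc_basis_def)
qed

lemma orthonormal_l2_dir_freqs: "orthonormal_l2 (cycV m) (cyc_basis m) dir_freqs"
  using m_pos dir_freqs_dvd_imp_eq by (rule orthonormal_l2_cyc_basis)

lemma dir_translate_in_PW: "dir_translate j \<in> PW (cycV m) (cycE m) 2"
proof -
  have "cyc_basis m ` dir_freqs \<subseteq> PW (cycV m) (cycE m) 2"
  proof
    fix f assume "f \<in> cyc_basis m ` dir_freqs"
    then obtain k where k: "k \<in> dir_freqs" "f = cyc_basis m k" by auto
    have "cyc_eigval m k \<le> 2" using k m_pos m_eq by (intro cyc_eigval_le_2) (auto simp: dir_freqs_def)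
    moreover have "f \<noteq> 0" using orthonormal_l2_nonzero[OF orthonormal_l2_dir_freqs k(1)] k(2) by simp
    moreover have "f \<in> l2 (cycV m)" using k(2) by (simp add: cyc_basis_def l2_def)
    ultimately show "f \<in> PW (cycV m) (cycE m) 2"
      unfolding PW_def using cyc_basis_eigen[OF m_ge_3, of k] k(2) by (intro cfun.span_base) auto
  qed
  then have "cspan (cyc_basis m ` dir_freqs) \<subseteq> cspan (PW (cycV m) (cycE m) 2)"
    by (rule cfun.span_mono)
  also have "cspan (PW (cycV m) (cycE m) 2) = PW (cycV m) (cycE m) 2"
    by (simp only: PW_def cfun.span_span)
  finally show ?thesis
    unfolding dir_translate_eq_lincomb using lincomb_in_cspan[OF finite_dir_sets(1)] by blast
qed

lemma card_cyc_eigval_le_2: "card {k \<in> {0..<int m}. cyc_eigval m k \<le> 2} \<le> 2 * m' + 1"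
proof -
  have "{k \<in> {0..<int m}. cyc_eigval m k \<le> 2} \<subseteq> {0..int m'} \<union> {3 * int m' + 1..<int m}"
  proof
    fix k assume k: "k \<in> {k \<in> {0..<int m}. cyc_eigval m k \<le> 2}"
    then have "\<not> (int m < 4 * k \<and> 4 * k < 3 * int m)" using cyc_eigval_gt_2[of m k] by auto
    then show "k \<in> {0..int m'} \<union> {3 * int m' + 1..<int m}" using k m_eq by auto
  qed
  then have "card {k \<in> {0..<int m}. cyc_eigval m k \<le> 2} \<le> card ({0..int m'} \<union> {3 * int m' + 1..<int m})"
    by (intro card_mono) auto
  also have "\<dots> \<le> card {0..int m'} + card {3 * int m' + 1..<int m}" by (rule card_Un_le)
  finally show ?thesis using m_eq by simp
qed

lemma mid_family_eq_tensor:
  assumes "\<nu> \<in> {1..N choose (K - 1)}"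
  shows "mid_family (j, \<nu>) = tensor (\<psi> (K - 1) \<nu>) (dir_translate j)"
proof (rule ext, clarify)
  fix u l
  show "mid_family (j, \<nu>) (u, l) = tensor (\<psi> (K - 1) \<nu>) (dir_translate j) (u, l)"
    using \<psi>_vanishes[OF _ assms, of u] K_less_N
    by (auto simp: mid_family_def tensor_def dir_translate_def)
qed

lemma mid_family_in_mid_space:
  assumes "\<nu> \<in> {1..N choose (K - 1)}"
  shows "mid_family (j, \<nu>) \<in> tens (eigsp (cubeV N) (cubeE N) (2 * real K - 2)) (PW (cycV m) (cycE m) 2)"
proof -
  have eq: "2 * real K - 2 = 2 * real (K - 1)" using K_pos by (simp add: of_nat_diff)
  have "\<psi> (K - 1) \<nu> \<in> eigsp (cubeV N) (cubeE N) (2 * real K - 2)"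
    unfolding eq using \<psi>_in_eigsp[OF _ assms] K_less_N by simp
  then show ?thesis
    unfolding mid_family_eq_tensor[OF assms] tens_def tensor_def
    by (intro cfun.span_base CollectI exI conjI) (rule refl | assumption | rule dir_translate_in_PW)+
qed

lemma dir_nodes_inj: "inj_on (\<lambda>k. cyc_char m k (-2)) dir_freqs"
proof (rule inj_onI)
  fix k k' assume k: "k \<in> dir_freqs" "k' \<in> dir_freqs" and eq: "cyc_char m k (-2) = cyc_char m k' (-2)"
  have "cyc_char m (k - k') (-2) = cyc_char m k' (-2) * cnj (cyc_char m k' (-2))"
    using eq by (simp add: cyc_char_mult_cnj[symmetric])
  also have "\<dots> = 1" by (simp flip: complex_norm_square)
  finally have "int m dvd (k - k') * (-2)" by (simp only: cyc_char_eq_1_iff[OF m_pos])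
  moreover have "(k - k') * (-2) = - (2 * (k - k'))" by simp
  ultimately have "int m dvd 2 * (k - k')" by (simp only: dvd_minus_iff)
  moreover have "coprime (int m) 2" using m_eq by simp
  ultimately have "int m dvd (k - k')" using coprime_dvd_mult_right_iff by blast
  then show "k = k'" using k dir_freqs_dvd_imp_eq by blast
qed

lemma inner_mid_family:
  assumes "\<nu> \<in> {1..N choose (K - 1)}" "\<nu>' \<in> {1..N choose (K - 1)}" "k \<in> dir_freqs"
  shows "inner_l2 (cubeV N \<times> cycV m) (mid_family (j, \<nu>)) (tensor (\<psi> (K - 1) \<nu>') (cyc_basis m k))
    = (if \<nu> = \<nu>' then dir_coeff j k else 0)"
proof -
  have "inner_l2 (cycV m) (dir_translate j) (cyc_basis m k) = dir_coeff j k"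
    unfolding dir_translate_eq_lincomb by (rule orthonormal_l2_coeff[OF finite_dir_sets(1) orthonormal_l2_dir_freqs assms(3)])
  moreover have "inner_l2 (cubeV N) (\<psi> (K - 1) \<nu>) (\<psi> (K - 1) \<nu>') = (if \<nu> = \<nu>' then 1 else 0)"
    using \<psi>_orthonormal[of "K - 1"] assms(1,2) K_less_N unfolding orthonormal_l2_def by simp
  ultimately show ?thesis
    by (simp add: mid_family_eq_tensor[OF assms(1)] inner_l2_tensor)
qed

lemma inner_lincomb_mid_family:
  assumes "\<nu>' \<in> {1..N choose (K - 1)}" "k \<in> dir_freqs"
  shows "inner_l2 (cubeV N \<times> cycV m) (lincomb c mid_family (dir_shifts \<times> {1..N choose (K - 1)}))
      (tensor (\<psi> (K - 1) \<nu>') (cyc_basis m k))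
    = (\<Sum>n\<le>2 * m'. c (int n, \<nu>') * cyc_char m k (-2) ^ n) / complex_of_real (sqrt (2 * real m' + 1))"
proof -
  have "inner_l2 (cubeV N \<times> cycV m) (lincomb c mid_family (dir_shifts \<times> {1..N choose (K - 1)}))
      (tensor (\<psi> (K - 1) \<nu>') (cyc_basis m k))
      = (\<Sum>j\<in>dir_shifts. \<Sum>\<nu>\<in>{1..N choose (K - 1)}. c (j, \<nu>) * (if \<nu> = \<nu>' then dir_coeff j k else 0))"
    unfolding inner_l2_lincomb_left[OF finite_SigmaI[OF finite_dir_sets(2) finite_atLeastAtMost]]
      sum.cartesian_product'
    by (intro sum.cong refl, subst inner_mid_family) (use assms in auto)
  also have "\<dots> = (\<Sum>j\<in>dir_shifts. c (j, \<nu>') * dir_coeff j k)"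
    using assms(1) by (simp add: if_distrib cong: if_cong)
  also have "\<dots> = (\<Sum>n\<le>2 * m'. c (int n, \<nu>') * dir_coeff (int n) k)"
    by (simp add: dir_shifts_eq sum.reindex)
  also have "\<dots> = (\<Sum>n\<le>2 * m'. c (int n, \<nu>') * cyc_char m k (-2) ^ n) / complex_of_real (sqrt (2 * real m' + 1))"
    using cyc_char_power[of m k "-2"] by (simp add: dir_coeff_def sum_divide_distrib)
  finally show ?thesis .
qed

lemma family_independent_mid_family:
  "family_independent mid_family (dir_shifts \<times> {1..N choose (K - 1)})"
  unfolding family_independent_def
proof (intro allI impI ballI)
  fix c p assume zero: "lincomb c mid_family (dir_shifts \<times> {1..N choose (K - 1)}) = 0"
    and p: "p \<in> dir_shifts \<times> {1..N choose (K - 1)}"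
  then obtain j \<nu> where p_eq: "p = (j, \<nu>)" and j: "j \<in> dir_shifts" and \<nu>: "\<nu> \<in> {1..N choose (K - 1)}"
    by blast
  have roots: "(\<Sum>n\<le>2 * m'. c (int n, \<nu>) * z ^ n) = 0" if node: "z \<in> (\<lambda>k. cyc_char m k (-2)) ` dir_freqs" for z
  proof -
    obtain k where k: "k \<in> dir_freqs" and z: "z = cyc_char m k (-2)" using node by blast
    have "inner_l2 (cubeV N \<times> cycV m) (lincomb c mid_family (dir_shifts \<times> {1..N choose (K - 1)}))
        (tensor (\<psi> (K - 1) \<nu>) (cyc_basis m k)) = 0"
      unfolding zero by (simp add: inner_l2_def)
    then have "(\<Sum>n\<le>2 * m'. c (int n, \<nu>) * z ^ n) / complex_of_real (sqrt (2 * real m' + 1)) = 0"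
      unfolding inner_lincomb_mid_family[OF \<nu> k] z .
    then show ?thesis by simp
  qed
  have "\<forall>n\<le>2 * m'. c (int n, \<nu>) = 0"
    by (rule poly_coeffs_eq_0_if_many_roots[OF _ _ roots])
      (simp_all add: card_image[OF dir_nodes_inj] card_dir_freqs)
  then show "c p = 0" using j by (auto simp: p_eq dir_shifts_eq)
qed

lemma mid_space_cspan:
  "cspan (mid_family ` (dir_shifts \<times> {1..N choose (K - 1)}))
    = tens (eigsp (cubeV N) (cubeE N) (2 * real K - 2)) (PW (cycV m) (cycE m) 2)"
    (is "cspan ?F = ?S")
proof
  have fin: "finite (dir_shifts \<times> {1..N choose (K - 1)})" by simp
  have sub: "?F \<subseteq> ?S" using mid_family_in_mid_space by auto
  show "cspan ?F \<subseteq> ?S" by (rule cfun.span_minimal[OF sub]) (simp add: tens_def cfun.subspace_span)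
  show "?S \<subseteq> cspan ?F"
  proof (rule cfun.independent_spans_if_card_ge[of "prod_basis ` modes_mid"])
    have "card (prod_basis ` modes_mid) \<le> card modes_mid" by (rule card_image_le) simp
    also have "\<dots> = (N choose (K - 1)) * card {k \<in> {0..<int m}. cyc_eigval m k \<le> 2}"
      by (simp add: modes_mid_def card_cartesian_product)
    also have "\<dots> \<le> (N choose (K - 1)) * (2 * m' + 1)" by (rule mult_le_mono2[OF card_cyc_eigval_le_2])
    also have "\<dots> = card ?F"
      using family_independent_inj_on[OF fin family_independent_mid_family]
      by (simp add: card_image card_cartesian_product card_dir_shifts)
    finally show "card (prod_basis ` modes_mid) \<le> card ?F" .
  qed (use sub mid_space_eq family_independent_independent[OF fin family_independent_mid_family] in auto)
qed

lemma Dbar_0: "(cmod (Dbar m m' 0))^2 = 1/2 + 1 / (2 * real m)"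
proof -
  have "Dir m m' 0 = of_nat (2 * m' + 1)" by (simp add: Dir_eq_sum_cyc_char)
  then have "Dbar m m' 0 = complex_of_real ((2 * real m' + 1) / sqrt (real m * (2 * real m' + 1)))"
    by (simp add: Dbar_def)
  then have "(cmod (Dbar m m' 0))^2 = ((2 * real m' + 1) / sqrt (real m * (2 * real m' + 1)))^2"
    by (simp only: norm_of_real power2_abs)
  also have "\<dots> = (2 * real m' + 1) / real m" by (simp add: power_divide power2_eq_square)
  also have "\<dots> = 1/2 + 1 / (2 * real m)" using m_eq by (simp add: field_simps)
  finally show ?thesis .
qed

lemma cdim_mid_space:
  "cdim (tens (eigsp (cubeV N) (cubeE N) (2 * real K - 2)) (PW (cycV m) (cycE m) 2))
    = ((m + 1) div 2) * (N choose (K - 1))"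
proof -
  have "(m + 1) div 2 = 2 * m' + 1" using m_eq by simp
  moreover have "cdim (tens (eigsp (cubeV N) (cubeE N) (2 * real K - 2)) (PW (cycV m) (cycE m) 2))
      = card (dir_shifts \<times> {1..N choose (K - 1)})"
    unfolding mid_space_cspan[symmetric]
    by (rule cdim_cspan_family_independent[OF _ family_independent_mid_family]) simp
  ultimately show ?thesis by (simp add: card_cartesian_product card_dir_shifts)
qed

lemma mid_space_basis:
  "is_basis (tens (eigsp (cubeV N) (cubeE N) (2 * real K - 2)) (PW (cycV m) (cycE m) 2))
     (\<lambda>(j, \<nu>). \<lambda>(u, l). if (u, l) \<in> cubeV N \<times> cycV m then Dbar m m' (l - 2 * j) * \<psi> (K - 1) \<nu> u else 0)
     ({0..(int m - 1) div 2} \<times> {1..N choose (K - 1)})"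
  unfolding is_basis_iff mid_family_def[symmetric] dir_shifts_def[symmetric]
  using family_independent_mid_family mid_space_cspan by simp

lemma mid_space_Qop:
  assumes "f \<in> tens (eigsp (cubeV N) (cubeE N) (2 * real K - 2)) (PW (cycV m) (cycE m) 2)"
  shows "(1/2 + 1 / (2 * real m)) * norm2_l2 (cubeV N \<times> cycV m) (Qop f) =
    (\<Sum>\<nu>\<in>{1..N choose (K - 1)}. (cmod (inner_l2 (cubeV N \<times> cycV m) (Qop f)
       (\<lambda>(u, l). if (u, l) \<in> cubeV N \<times> cycV m then Dbar m m' l * \<psi> (K - 1) \<nu> u else 0)))^2)"
proof -
  have "2 * real K - 2 = 2 * real (K - 1)" using K_pos by (simp add: of_nat_diff)
  then have "f \<in> tens (eigsp (cubeV N) (cubeE N) (2 * real (K - 1))) (PW (cycV m) (cycE m) 2)"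
    using assms by (simp only:)
  from eigsp_Qop_parseval[OF _ this, of "Dbar m m'"] K_less_N show ?thesis
    by (simp add: Dbar_0)
qed

end

end

theorem theorem4:
  fixes N m K :: nat
    and \<psi> :: "nat \<Rightarrow> nat \<Rightarrow> (nat \<Rightarrow> bool) \<Rightarrow> complex"
  assumes "N \<ge> 2" and "m \<ge> 3" and "0 < K" and "K < N"
    and \<psi>_onb: "\<And>\<kappa>. \<kappa> \<le> N \<Longrightarrow>
       is_onb (cubeV N) (eigsp (cubeV N) (cubeE N) (2 * real \<kappa>)) (\<psi> \<kappa>) {1..N choose \<kappa>}"
  defines "V \<equiv> prodV (cubeV N) (cycV m)"
    and "E \<equiv> prodE (cubeE N) (cycE m)"
    and "S1 \<equiv> tens (PW (cubeV N) (cubeE N) (2 * real K - 4)) (l2 (cycV m))"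
    and "S2 \<equiv> tens (eigsp (cubeV N) (cubeE N) (2 * real K - 2)) (PW (cycV m) (cycE m) 2)"
    and "S3 \<equiv> tens (eigsp (cubeV N) (cubeE N) (2 * real K)) (eigsp (cycV m) (cycE m) 0)"
  shows
    "PW V E (2 * real K) = {a + b + c | a b c. a \<in> S1 \<and> b \<in> S2 \<and> c \<in> S3}
     \<and> (\<forall>a\<in>S1. \<forall>b\<in>S2. inner_l2 V a b = 0)
     \<and> (\<forall>a\<in>S1. \<forall>c\<in>S3. inner_l2 V a c = 0)
     \<and> (\<forall>b\<in>S2. \<forall>c\<in>S3. inner_l2 V b c = 0)
     \<and> cdim S1 = m * (\<Sum>\<kappa><K - 1. N choose \<kappa>)
     \<and> is_onb V S1
         (\<lambda>(j, \<kappa>, \<nu>). \<lambda>(u, l). if (u, l) \<in> V then delta0 ((l - j) mod int m) * \<psi> \<kappa> \<nu> u else 0)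
         ({0..<int m} \<times> (SIGMA \<kappa>:{..<K - 1}. {1..N choose \<kappa>}))
     \<and> (\<forall>f\<in>S1. norm2_l2 V (Qop f) =
          (\<Sum>\<kappa><K - 1. \<Sum>\<nu>\<in>{1..N choose \<kappa>}.
             (cmod (inner_l2 V (Qop f)
                (\<lambda>(u, l). if (u, l) \<in> V then delta0 l * \<psi> \<kappa> \<nu> u else 0)))^2))
     \<and> (\<forall>m'::nat. 0 < m' \<and> m = 4 * m' + 1 \<longrightarrow>
          cdim S2 = ((m + 1) div 2) * (N choose (K - 1))
          \<and> is_basis S2
              (\<lambda>(j, \<nu>). \<lambda>(u, l). if (u, l) \<in> V then Dbar m m' (l - 2 * j) * \<psi> (K - 1) \<nu> u else 0)
              ({0..(int m - 1) div 2} \<times> {1..N choose (K - 1)})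
          \<and> (\<forall>f\<in>S2. (1/2 + 1 / (2 * real m)) * norm2_l2 V (Qop f) =
               (\<Sum>\<nu>\<in>{1..N choose (K - 1)}.
                  (cmod (inner_l2 V (Qop f)
                     (\<lambda>(u, l). if (u, l) \<in> V then Dbar m m' l * \<psi> (K - 1) \<nu> u else 0)))^2)))
     \<and> cdim S3 = N choose K
     \<and> is_onb V S3
         (\<lambda>\<nu>. \<lambda>(u, l). if (u, l) \<in> V then \<psi> K \<nu> u / complex_of_real (sqrt (real m)) else 0)
         {1..N choose K}
     \<and> (\<forall>f\<in>S3. (1 / real m) * norm2_l2 V (Qop f) =
          (\<Sum>\<nu>\<in>{1..N choose K}.
             (cmod (inner_l2 V (Qop f)
                (\<lambda>(u, l). if (u, l) \<in> V then \<psi> K \<nu> u / complex_of_real (sqrt (real m)) else 0)))^2))"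
proof -
  interpret cube_cycle N m K \<psi>
    using assms by unfold_locales auto
  have V: "V = cubeV N \<times> cycV m" by (simp add: V_def prodV_def)
  show ?thesis
    unfolding V E_def S1_def S2_def S3_def
    by (intro conjI ballI allI impI; (elim conjE)?;
        (rule PW_prod_decomposition low_mid_orthogonal low_top_orthogonal mid_top_orthogonal
          cdim_low_space low_space_onb low_space_Qop cdim_mid_space mid_space_basis mid_space_Qop
          cdim_top_space top_space_onb top_space_Qop; assumption))
qed

end
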